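(* Let $\alpha>0$. For each $t>0$, the function $\xi\mapsto\rho_\alpha(\|\xi\|,t)$ is a continuous positive definite function on $K$ (with the inductive limit topology), where $\rho_\alpha(s,t)=e^{-ts^\alpha}$ for $s>1$ and $\rho_\alpha(s,t)=1$ for $0\le s\le1$.
   Context: $k$ is a non-Archimedean local field of characteristic $0$; $k=K_1\subset K_2\subset\cdots$ are finite extensions, $K=\bigcup_nK_n$ with the inductive limit topology of the $K_n$; $m_n=[K_n:k]$, $|\cdot|_n$ the normalized absolute value of $K_n$, and $\|x\|=|x|_n^{1/m_n}$ for $x\in K_n$ (well defined on $K$). A function $\phi:K\to\mathbb C$ is positive definite if $\sum_{i,j}c_i\overline{c_j}\phi(\xi_i-\xi_j)\ge0$ for all finite families $\xi_i\in K$, $c_i\in\mathbb C$. *)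

theory Defs
  imports "HOL-Analysis.Analysis"
begin

text \<open>Subfields of an ambient field (the ambient field plays the role of K).\<close>
definition subfield :: "'a::field set \<Rightarrow> bool" where
  "subfield F \<longleftrightarrow> 0 \<in> F \<and> 1 \<in> F \<and>
     (\<forall>x\<in>F. \<forall>y\<in>F. x + y \<in> F \<and> x * y \<in> F) \<and>
     (\<forall>x\<in>F. - x \<in> F \<and> inverse x \<in> F)"

definition nonarch_abs :: "'a::field set \<Rightarrow> ('a \<Rightarrow> real) \<Rightarrow> bool" where
  "nonarch_abs F av \<longleftrightarrow>
     (\<forall>x\<in>F. 0 \<le> av x \<and> (av x = 0 \<longleftrightarrow> x = 0)) \<and>
     (\<forall>x\<in>F. \<forall>y\<in>F. av (x * y) = av x * av y \<and> av (x + y) \<le> max (av x) (av y))"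

definition abs_complete :: "'a::field set \<Rightarrow> ('a \<Rightarrow> real) \<Rightarrow> bool" where
  "abs_complete F av \<longleftrightarrow>
     (\<forall>s::nat \<Rightarrow> 'a. (\<forall>n. s n \<in> F) \<and>
        (\<forall>e>0. \<exists>N. \<forall>i\<ge>N. \<forall>j\<ge>N. av (s i - s j) < e) \<longrightarrow>
        (\<exists>l\<in>F. \<forall>e>0. \<exists>N. \<forall>n\<ge>N. av (s n - l) < e))"

text \<open>Cardinality of the residue field O/P, O = {|x| \<le> 1}, P = {|x| < 1}
  (0 if infinite).\<close>
definition residue_card :: "'a::field set \<Rightarrow> ('a \<Rightarrow> real) \<Rightarrow> nat" where
  "residue_card F av =
     card ((\<lambda>x. {y \<in> F. av y \<le> 1 \<and> av (y - x) < 1}) ` {x \<in> F. av x \<le> 1})"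

text \<open>F with av is a non-Archimedean local field and av is its normalized absolute
  value: F is complete for a discrete non-Archimedean absolute value with finite
  residue field of cardinality q, and the value group is exactly q^Z
  (so a uniformizer has absolute value 1/q).\<close>
definition normalized_local_field :: "'a::field set \<Rightarrow> ('a \<Rightarrow> real) \<Rightarrow> bool" where
  "normalized_local_field F av \<longleftrightarrow>
     subfield F \<and> nonarch_abs F av \<and> abs_complete F av \<and>
     residue_card F av \<ge> 2 \<and>
     av ` (F - {0}) = range (\<lambda>n::int. real (residue_card F av) powi n)"

definition ext_degree :: "'a::field set \<Rightarrow> 'a set \<Rightarrow> nat \<Rightarrow> bool" where
  "ext_degree k F d \<longleftrightarrow> k \<subseteq> F \<and>
     (\<exists>b::nat \<Rightarrow> 'a. (\<forall>i<d. b i \<in> F) \<and>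
        (\<forall>x\<in>F. \<exists>!c::nat \<Rightarrow> 'a. (\<forall>i<d. c i \<in> k) \<and> (\<forall>i\<ge>d. c i = 0) \<and>
                     x = (\<Sum>i<d. c i * b i)))"

definition knorm :: "(nat \<Rightarrow> 'a set) \<Rightarrow> (nat \<Rightarrow> 'a \<Rightarrow> real) \<Rightarrow> (nat \<Rightarrow> nat) \<Rightarrow> 'a \<Rightarrow> real" where
  "knorm K av m x = (let N = (LEAST n. x \<in> K n) in av N x powr (1 / real (m N)))"

definition ind_lim_topology :: "(nat \<Rightarrow> 'a::field set) \<Rightarrow> (nat \<Rightarrow> 'a \<Rightarrow> real) \<Rightarrow> 'a topology" where
  "ind_lim_topology K av = topology (\<lambda>U. \<forall>n. \<forall>x\<in>U \<inter> K n. \<exists>e>0.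
       \<forall>y\<in>K n. av n (y - x) < e \<longrightarrow> y \<in> U)"

definition rho :: "real \<Rightarrow> real \<Rightarrow> real \<Rightarrow> real" where
  "rho \<alpha> s t = (if s > 1 then exp (- t * s powr \<alpha>) else 1)"

definition positive_definite :: "('a::ab_group_add \<Rightarrow> complex) \<Rightarrow> bool" where
  "positive_definite \<phi> \<longleftrightarrow>
     (\<forall>(n::nat) (\<xi>::nat \<Rightarrow> 'a) (c::nat \<Rightarrow> complex).
        let S = (\<Sum>i<n. \<Sum>j<n. c i * cnj (c j) * \<phi> (\<xi> i - \<xi> j)) in
        Im S = 0 \<and> Re S \<ge> 0)"

end

theory Submission
  imports Defs
begin

text \<open>
  If L/k is an extension of degree d of local fields whose normalized absolute values have the
  same open unit ball on k, then both are powers of one another on k, and the exponent is d.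
  Indeed, count the classes of the integers of L modulo p, a uniformizer of k: a basis of their
  reduction over the residue field of k (which spans by completeness of k) gives q_k^d classes,
  and digit expansions in a uniformizer of L give q_L^e classes, where |p|_L = q_L^(-e).
  Applied along the tower, once the unit balls of K_n and K_n' are shown to agree on K_n, this
  makes the norm on K well defined and ultrametric. A decreasing function of an ultrametric norm
  is positive definite, being a positive combination of indicators of equivalence relations, and
  it is locally constant, hence continuous for the inductive limit topology.
\<close>

section \<open>Linear algebra over a subfield\<close>

definition lin_indep :: "'a::field set \<Rightarrow> 'b set \<Rightarrow> ('b \<Rightarrow> 'a) \<Rightarrow> bool" where
  "lin_indep k J u \<longleftrightarrow> (\<forall>g. (\<forall>j\<in>J. g j \<in> k) \<and> (\<Sum>j\<in>J. g j * u j) = 0 \<longrightarrow> (\<forall>j\<in>J. g j = 0))"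

definition in_span :: "'a::field set \<Rightarrow> 'b set \<Rightarrow> ('b \<Rightarrow> 'a) \<Rightarrow> 'a \<Rightarrow> bool" where
  "in_span k I w z \<longleftrightarrow> (\<exists>a. (\<forall>i\<in>I. a i \<in> k) \<and> z = (\<Sum>i\<in>I. a i * w i))"

locale subfield_set =
  fixes F :: "'a::field set"
  assumes subfield: "subfield F"
begin

lemma zero_closed [simp, intro]: "0 \<in> F"
  and one_closed [simp, intro]: "1 \<in> F"
  and add_closed [intro]: "x \<in> F \<Longrightarrow> y \<in> F \<Longrightarrow> x + y \<in> F"
  and mult_closed [intro]: "x \<in> F \<Longrightarrow> y \<in> F \<Longrightarrow> x * y \<in> F"
  and uminus_closed [intro]: "x \<in> F \<Longrightarrow> - x \<in> F"
  and inverse_closed [intro]: "x \<in> F \<Longrightarrow> inverse x \<in> F"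
  using subfield unfolding subfield_def by auto

lemma diff_closed [intro]: "x \<in> F \<Longrightarrow> y \<in> F \<Longrightarrow> x - y \<in> F"
  using add_closed[of x "- y"] by auto

lemma divide_closed [intro]: "x \<in> F \<Longrightarrow> y \<in> F \<Longrightarrow> x / y \<in> F"
  by (auto simp: divide_inverse)

lemma power_closed [intro]: "x \<in> F \<Longrightarrow> x ^ n \<in> F"
  by (induction n) auto

lemma power_int_closed [intro]: "x \<in> F \<Longrightarrow> x powi n \<in> F"
  by (auto simp: power_int_def)

lemma sum_closed [intro]: "(\<And>i. i \<in> I \<Longrightarrow> f i \<in> F) \<Longrightarrow> sum f I \<in> F"
  by (induction I rule: infinite_finite_induct) auto

lemma lin_indep_eliminate:
  assumes "finite J" "lin_indep F J u" "j0 \<in> J" "\<And>j. j \<in> J \<Longrightarrow> t j \<in> F"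
  shows "lin_indep F (J - {j0}) (\<lambda>j. u j - t j * u j0)"
  unfolding lin_indep_def
proof (intro allI impI)
  fix g
  assume g: "(\<forall>j\<in>J - {j0}. g j \<in> F) \<and> (\<Sum>j\<in>J - {j0}. g j * (u j - t j * u j0)) = 0"
  define g' where "g' j = (if j = j0 then - (\<Sum>j\<in>J - {j0}. g j * t j) else g j)" for j
  have "(\<Sum>j\<in>J. g' j * u j) = g' j0 * u j0 + (\<Sum>j\<in>J - {j0}. g j * u j)"
    using assms(1,3) by (simp add: sum.remove g'_def)
  also have "(\<Sum>j\<in>J - {j0}. g j * u j) = (\<Sum>j\<in>J - {j0}. g j * t j) * u j0"
    using g by (simp add: right_diff_distrib sum_subtractf sum_distrib_right mult.assoc)
  finally have "(\<Sum>j\<in>J. g' j * u j) = 0"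
    by (simp add: g'_def)
  moreover have "\<forall>j\<in>J. g' j \<in> F"
    using g assms(4) by (auto simp: g'_def intro!: uminus_closed sum_closed mult_closed)
  ultimately have "\<forall>j\<in>J. g' j = 0"
    using assms(2) unfolding lin_indep_def by blast
  then show "\<forall>j\<in>J - {j0}. g j = 0"
    by (auto simp: g'_def split: if_splits)
qed

lemma in_span_eliminate:
  assumes "\<beta> \<noteq> 0" "\<alpha> \<in> F" "\<beta> \<in> F" "\<forall>i\<in>I. a i \<in> F" "\<forall>i\<in>I. b i \<in> F"
  shows "in_span F I w ((\<alpha> * v + (\<Sum>i\<in>I. a i * w i)) - \<alpha> / \<beta> * (\<beta> * v + (\<Sum>i\<in>I. b i * w i)))"
proof -
  have "(\<alpha> * v + (\<Sum>i\<in>I. a i * w i)) - \<alpha> / \<beta> * (\<beta> * v + (\<Sum>i\<in>I. b i * w i))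
      = (\<Sum>i\<in>I. (a i - \<alpha> / \<beta> * b i) * w i)"
    using assms(1) by (simp add: algebra_simps sum_subtractf sum_distrib_left)
  moreover have "\<forall>i\<in>I. a i - \<alpha> / \<beta> * b i \<in> F"
    using assms by (simp add: diff_closed mult_closed divide_closed)
  ultimately show ?thesis
    unfolding in_span_def by (intro exI[of _ "\<lambda>i. a i - \<alpha> / \<beta> * b i"]) simp
qed

lemma card_le_if_lin_indep_in_span:
  assumes "finite I"
  shows "finite J \<Longrightarrow> lin_indep F J u \<Longrightarrow> \<forall>j\<in>J. in_span F I w (u j) \<Longrightarrow> card J \<le> card I"
  using assms
proof (induction I arbitrary: J u rule: finite_induct)
  case empty
  then have "u j = 0" if "j \<in> J" for j
    using that by (auto simp: in_span_def)
  then have "\<forall>j\<in>J. (1::'a) = 0"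
    using empty.prems(2) unfolding lin_indep_def by (auto dest: spec[where x = "\<lambda>_. 1"])
  then show ?case
    by (cases "J = {}") auto
next
  case (insert i0 I)
  obtain A where A: "\<And>j. j \<in> J \<Longrightarrow> (\<forall>i\<in>insert i0 I. A j i \<in> F)"
    "\<And>j. j \<in> J \<Longrightarrow> u j = A j i0 * w i0 + (\<Sum>i\<in>I. A j i * w i)"
    using insert.prems(3) insert.hyps unfolding in_span_def by (simp add: Ball_def) metis
  show ?case
  proof (cases "\<forall>j\<in>J. A j i0 = 0")
    case True
    then have "\<forall>j\<in>J. in_span F I w (u j)"
      using A unfolding in_span_def by auto
    then show ?thesis
      using insert by (simp add: le_Suc_eq)
  next
    case False
    then obtain j0 where j0: "j0 \<in> J" "A j0 i0 \<noteq> 0"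
      by blast
    define t where "t j = A j i0 / A j0 i0" for j
    have t: "t j \<in> F" if "j \<in> J" for j
      using A(1) that j0 by (auto simp: t_def)
    have "in_span F I w (u j - t j * u j0)" if "j \<in> J - {j0}" for j
      using in_span_eliminate[OF j0(2), of "A j i0" I "\<lambda>i. A j i" "\<lambda>i. A j0 i" w "w i0"]
        A[of j] A[OF j0(1)] that by (simp add: t_def)
    then have "card (J - {j0}) \<le> card I"
      using insert.IH[of "J - {j0}" "\<lambda>j. u j - t j * u j0"] insert.prems(1)
        lin_indep_eliminate[OF insert.prems(1,2) j0(1) t] by simp
    moreover have "card J = Suc (card (J - {j0}))"
      using card_Suc_Diff1[OF insert.prems(1) j0(1)] by simp
    ultimately show ?thesis
      using insert.hyps by simp
  qed
qed

lemma ext_degree_basis: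
  assumes "ext_degree F L d"
  obtains b where "\<forall>i<d. b i \<in> L" "lin_indep F {..<d} b" "\<forall>x\<in>L. in_span F {..<d} b x"
proof -
  have "\<exists>b. (\<forall>i<d. b i \<in> L) \<and>
      (\<forall>x\<in>L. \<exists>!c. (\<forall>i<d. c i \<in> F) \<and> (\<forall>i\<ge>d. c i = 0) \<and> x = (\<Sum>i<d. c i * b i))"
    using assms unfolding ext_degree_def by (rule conjunct2)
  then obtain b where b: "\<forall>i<d. b i \<in> L"
    and coords: "\<forall>x\<in>L. \<exists>!c. (\<forall>i<d. c i \<in> F) \<and> (\<forall>i\<ge>d. c i = 0) \<and> x = (\<Sum>i<d. c i * b i)"
    by blast
  have "\<forall>x\<in>L. in_span F {..<d} b x"
    using coords unfolding in_span_def by (metis lessThan_iff)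
  moreover have "lin_indep F {..<d} b"
    unfolding lin_indep_def
  proof (intro allI impI ballI)
    fix g j
    assume g: "(\<forall>j\<in>{..<d}. g j \<in> F) \<and> (\<Sum>j\<in>{..<d}. g j * b j) = 0" and j: "j \<in> {..<d}"
    define zero_coords where "zero_coords c \<longleftrightarrow>
        (\<forall>i<d. c i \<in> F) \<and> (\<forall>i\<ge>d. c i = 0) \<and> 0 = (\<Sum>i<d. c i * b i)" for c :: "nat \<Rightarrow> 'a"
    have "0 \<in> L"
      using assms unfolding ext_degree_def by auto
    then have unique: "\<exists>!c. zero_coords c"
      using coords unfolding zero_coords_def by blast
    have "zero_coords (\<lambda>i. if i < d then g i else 0)" "zero_coords (\<lambda>_. 0)"
      using g by (simp_all add: zero_coords_def)
    then have "(\<lambda>i. if i < d then g i else 0) = (\<lambda>_. 0)"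
      using the1_equality[OF unique] by metis
    then show "g j = 0"
      using j by (metis lessThan_iff)
  qed
  ultimately show ?thesis
    using that b by blast
qed

end

section \<open>Non-Archimedean absolute values\<close>

lemma nonarch_abs_subset: "nonarch_abs L av \<Longrightarrow> k \<subseteq> L \<Longrightarrow> nonarch_abs k av"
  unfolding nonarch_abs_def by (meson subsetD)

locale nonarch_subfield = subfield_set F for F :: "'a::field set" +
  fixes av :: "'a \<Rightarrow> real"
  assumes nonarch: "nonarch_abs F av"
begin

lemma av_nonneg [simp]: "x \<in> F \<Longrightarrow> 0 \<le> av x"
  and av_eq_0_iff [simp]: "x \<in> F \<Longrightarrow> av x = 0 \<longleftrightarrow> x = 0"
  and av_mult: "x \<in> F \<Longrightarrow> y \<in> F \<Longrightarrow> av (x * y) = av x * av y"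
  and av_add: "x \<in> F \<Longrightarrow> y \<in> F \<Longrightarrow> av (x + y) \<le> max (av x) (av y)"
  using nonarch unfolding nonarch_abs_def by auto

lemma av_pos: "x \<in> F \<Longrightarrow> x \<noteq> 0 \<Longrightarrow> 0 < av x"
  using av_nonneg av_eq_0_iff by (metis less_eq_real_def)

lemma av_zero [simp]: "av 0 = 0"
  by simp

lemma av_one [simp]: "av 1 = 1"
proof -
  have "av 1 * av 1 = av 1 * 1" "av 1 \<noteq> 0"
    using av_mult[of 1 1] by simp_all
  then show ?thesis
    by (metis mult_left_cancel)
qed

lemma av_minus_one: "av (- 1) = 1"
proof -
  have "av (- 1) * av (- 1) = 1"
    using av_mult[of "- 1" "- 1"] by (simp add: uminus_closed)
  moreover have "0 \<le> av (- 1)"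
    by (simp add: uminus_closed)
  ultimately show ?thesis
    using square_eq_1_iff by fastforce
qed

lemma av_uminus [simp]: "x \<in> F \<Longrightarrow> av (- x) = av x"
  using av_mult[of "- 1" x] by (simp add: av_minus_one uminus_closed)

lemma av_minus_commute: "x \<in> F \<Longrightarrow> y \<in> F \<Longrightarrow> av (x - y) = av (y - x)"
  using av_uminus[of "x - y"] by (simp add: diff_closed)

lemma av_diff: "x \<in> F \<Longrightarrow> y \<in> F \<Longrightarrow> av (x - y) \<le> max (av x) (av y)"
  using av_add[of x "- y"] by auto

lemma av_inverse: "x \<in> F \<Longrightarrow> av (inverse x) = inverse (av x)"
  using av_mult[of x "inverse x"] by (cases "x = 0") (auto intro: inverse_unique[symmetric])

lemma av_divide: "x \<in> F \<Longrightarrow> y \<in> F \<Longrightarrow> av (x / y) = av x / av y"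
  by (simp add: divide_inverse av_mult av_inverse inverse_closed)

lemma av_power: "x \<in> F \<Longrightarrow> av (x ^ n) = av x ^ n"
  by (induction n) (auto simp: av_mult power_closed)

lemma av_power_int: "x \<in> F \<Longrightarrow> av (x powi n) = av x powi n"
  by (auto simp: power_int_def av_power av_inverse power_inverse power_closed)

lemma av_add_eq_left:
  assumes "x \<in> F" "y \<in> F" "av y < av x"
  shows "av (x + y) = av x"
proof -
  have "av (x + y) \<le> av x"
    using av_add[of x y] assms by simp
  moreover have "av x \<le> max (av (x + y)) (av y)"
    using av_diff[of "x + y" y] assms by auto
  ultimately show ?thesis
    using assms(3) by linarith
qed

lemma av_sum_le:
  assumes "\<And>i. i \<in> I \<Longrightarrow> f i \<in> F" "\<And>i. i \<in> I \<Longrightarrow> av (f i) \<le> B" "0 \<le> B"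
  shows "av (sum f I) \<le> B"
  using assms
proof (induction I rule: infinite_finite_induct)
  case (insert i I)
  then have "av (f i) \<le> B" "av (sum f I) \<le> B"
    by auto
  moreover have "av (f i + sum f I) \<le> max (av (f i)) (av (sum f I))"
    using insert.prems by (intro av_add) auto
  ultimately show ?case
    using insert.hyps by simp
qed simp_all

lemma av_le_one_if_powers_bounded:
  assumes "x \<in> F" "\<And>j. av (x ^ j) \<le> C"
  shows "av x \<le> 1"
proof (rule ccontr)
  assume "\<not> av x \<le> 1"
  then obtain j where "C < av x ^ j"
    using real_arch_pow by fastforce
  then show False
    using assms av_power by (metis not_le)
qed

definition integers :: "'a set" where
  "integers = {x \<in> F. av x \<le> 1}"

definition ball_class :: "real \<Rightarrow> 'a \<Rightarrow> 'a set" where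
  "ball_class e x = {y \<in> integers. av (y - x) \<le> e}"

definition ball_classes :: "real \<Rightarrow> 'a set set" where
  "ball_classes e = ball_class e ` integers"

lemma integers_iff: "x \<in> integers \<longleftrightarrow> x \<in> F \<and> av x \<le> 1"
  by (simp add: integers_def)

lemma ball_class_eq_iff:
  assumes "x \<in> integers" "x' \<in> integers" "0 \<le> e"
  shows "ball_class e x = ball_class e x' \<longleftrightarrow> av (x - x') \<le> e"
proof
  assume "ball_class e x = ball_class e x'"
  moreover have "x \<in> ball_class e x"
    using assms by (simp add: ball_class_def)
  ultimately show "av (x - x') \<le> e"
    by (simp add: ball_class_def)
next
  assume close: "av (x - x') \<le> e"
  have xF: "x \<in> F" "x' \<in> F"
    using assms by (auto simp: integers_iff)
  have "av (y - x) \<le> e \<longleftrightarrow> av (y - x') \<le> e" if "y \<in> F" for y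
    using av_add[of "y - x" "x - x'"] av_add[of "y - x'" "x' - x"] av_minus_commute[OF xF] close that xF
    by (auto simp: diff_closed)
  then show "ball_class e x = ball_class e x'"
    by (auto simp: ball_class_def integers_iff)
qed

lemma card_ball_classes:
  assumes "R \<subseteq> integers" "0 \<le> e"
    and cover: "\<And>z. z \<in> integers \<Longrightarrow> \<exists>r\<in>R. av (z - r) \<le> e"
    and separate: "\<And>r r'. r \<in> R \<Longrightarrow> r' \<in> R \<Longrightarrow> av (r - r') \<le> e \<Longrightarrow> r = r'"
  shows "card (ball_classes e) = card R"
proof -
  have "bij_betw (ball_class e) R (ball_classes e)"
  proof (rule bij_betw_imageI)
    show "inj_on (ball_class e) R"
      using assms ball_class_eq_iff by (intro inj_onI) blast
    show "ball_class e ` R = ball_classes e"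
      unfolding ball_classes_def
      using assms ball_class_eq_iff by (auto simp: image_iff) (metis subsetD)+
  qed
  then show ?thesis
    by (simp add: bij_betw_same_card)
qed

lemma ex_ball_class_representatives:
  assumes "0 \<le> e"
  shows "\<exists>R\<subseteq>integers. card R = card (ball_classes e)
    \<and> (\<forall>z\<in>integers. \<exists>r\<in>R. av (z - r) \<le> e)
    \<and> (\<forall>r\<in>R. \<forall>r'\<in>R. av (r - r') \<le> e \<longrightarrow> r = r')"
proof -
  define pick where "pick C = (SOME x. x \<in> integers \<and> C = ball_class e x)" for C
  have pick: "pick (ball_class e z) \<in> integers \<and> ball_class e z = ball_class e (pick (ball_class e z))"
    if "z \<in> integers" for z
    unfolding pick_def using someI[of "\<lambda>x. x \<in> integers \<and> ball_class e z = ball_class e x" z] that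
    by simp
  define R where "R = pick ` ball_classes e"
  have "R \<subseteq> integers"
    using pick by (auto simp: R_def ball_classes_def)
  moreover have "\<forall>z\<in>integers. \<exists>r\<in>R. av (z - r) \<le> e"
  proof
    fix z
    assume "z \<in> integers"
    then have "av (z - pick (ball_class e z)) \<le> e"
      using pick ball_class_eq_iff[OF _ _ assms] by blast
    then show "\<exists>r\<in>R. av (z - r) \<le> e"
      using \<open>z \<in> integers\<close> by (auto simp: R_def ball_classes_def)
  qed
  moreover have "\<forall>r\<in>R. \<forall>r'\<in>R. av (r - r') \<le> e \<longrightarrow> r = r'"
    using pick ball_class_eq_iff[OF _ _ assms] by (auto simp: R_def ball_classes_def) metis
  ultimately show ?thesis
    using card_ball_classes[OF _ assms] by metis
qed

lemma card_ball_classes_combinations: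
  assumes "0 \<le> e"
    and integral: "\<And>a. \<forall>i<r. a i \<in> R \<Longrightarrow> (\<Sum>i<r. a i * w i) \<in> integers"
    and cover: "\<And>z. z \<in> integers \<Longrightarrow> \<exists>a. (\<forall>i<r. a i \<in> R) \<and> av (z - (\<Sum>i<r. a i * w i)) \<le> e"
    and separate: "\<And>a a'. \<forall>i<r. a i \<in> R \<Longrightarrow> \<forall>i<r. a' i \<in> R \<Longrightarrow>
      av ((\<Sum>i<r. a i * w i) - (\<Sum>i<r. a' i * w i)) \<le> e \<Longrightarrow> \<forall>i<r. a i = a' i"
  shows "card (ball_classes e) = card R ^ r"
proof -
  define comb where "comb a = (\<Sum>i<r. a i * w i)" for a
  define P where "P = PiE {..<r} (\<lambda>_. R)"
  have restrict: "restrict a {..<r} \<in> P" "comb (restrict a {..<r}) = comb a" if "\<forall>i<r. a i \<in> R" for a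
    using that by (auto simp: P_def comb_def)
  have eq: "\<forall>i<r. a i = a' i" if "a \<in> P" "a' \<in> P" "av (comb a - comb a') \<le> e" for a a'
  proof -
    have "\<forall>i<r. a i \<in> R" "\<forall>i<r. a' i \<in> R"
      using that(1,2) by (auto simp: P_def)
    then show ?thesis
      using that(3) unfolding comb_def by (rule separate)
  qed
  have "inj_on comb P"
  proof (rule inj_onI)
    fix a a'
    assume "a \<in> P" "a' \<in> P" "comb a = comb a'"
    then have "\<forall>i<r. a i = a' i"
      using eq[of a a'] \<open>0 \<le> e\<close> by simp
    with \<open>a \<in> P\<close> \<open>a' \<in> P\<close> show "a = a'"
      unfolding P_def by (intro PiE_ext) auto
  qed
  then have "card (comb ` P) = card R ^ r"
    by (simp add: card_image P_def card_PiE)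
  moreover have "card (ball_classes e) = card (comb ` P)"
  proof (rule card_ball_classes)
    show "comb ` P \<subseteq> integers"
      using integral by (auto simp: P_def comb_def)
    show "\<exists>s\<in>comb ` P. av (z - s) \<le> e" if "z \<in> integers" for z
      using cover[OF that] restrict by (metis comb_def imageI)
    show "s = s'" if ss: "s \<in> comb ` P" "s' \<in> comb ` P" "av (s - s') \<le> e" for s s'
    proof -
      obtain a a' where "a \<in> P" "a' \<in> P" "s = comb a" "s' = comb a'"
        using ss(1,2) by blast
      with ss(3) have "\<forall>i<r. a i = a' i"
        using eq by blast
      with \<open>s = comb a\<close> \<open>s' = comb a'\<close> show ?thesis
        by (simp add: comb_def)
    qed
  qed (rule assms(1))
  ultimately show ?thesis
    by simp
qed

lemma integers_mult_closed: "x \<in> integers \<Longrightarrow> y \<in> integers \<Longrightarrow> x * y \<in> integers"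
  by (auto simp: integers_iff av_mult mult_le_one)

lemma integers_diff_closed: "x \<in> integers \<Longrightarrow> y \<in> integers \<Longrightarrow> x - y \<in> integers"
  using av_diff[of x y] by (auto simp: integers_iff)

lemma integers_sum_closed: "(\<And>i. i \<in> I \<Longrightarrow> f i \<in> integers) \<Longrightarrow> sum f I \<in> integers"
  using av_sum_le[of I f 1] by (auto simp: integers_iff)

lemma same_open_ball_av_eq_1_iff:
  assumes nonarch': "nonarch_abs F av'"
    and same_ball: "\<And>x. x \<in> F \<Longrightarrow> av' x < 1 \<longleftrightarrow> av x < 1"
    and u: "u \<in> F" "u \<noteq> 0"
  shows "av u = 1 \<longleftrightarrow> av' u = 1"
proof -
  interpret av': nonarch_subfield F av'
    using nonarch' by unfold_locales
  have "av u = 1 \<longleftrightarrow> \<not> av u < 1 \<and> \<not> av (inverse u) < 1"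
    using av_pos[OF u] by (auto simp: av_inverse[OF u(1)] inverse_less_1_iff)
  also have "\<dots> \<longleftrightarrow> \<not> av' u < 1 \<and> \<not> av' (inverse u) < 1"
    using same_ball u by (simp add: inverse_closed)
  also have "\<dots> \<longleftrightarrow> av' u = 1"
    using av'.av_pos[OF u] by (auto simp: av'.av_inverse[OF u(1)] inverse_less_1_iff)
  finally show ?thesis .
qed

end

section \<open>Local fields\<close>

locale local_subfield = nonarch_subfield F av for F :: "'a::field set" and av +
  assumes complete: "abs_complete F av"
    and residue_card_ge_2: "residue_card F av \<ge> 2"
    and value_group: "av ` (F - {0}) = range (\<lambda>n::int. real (residue_card F av) powi n)"
begin

abbreviation q :: real where
  "q \<equiv> real (residue_card F av)"

lemma q_gt_1: "q > 1"
  using residue_card_ge_2 by simp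

lemma inverse_q_pos: "0 < inverse q" and inverse_q_less_1: "inverse q < 1"
  using q_gt_1 by (auto simp: inverse_less_1_iff)

lemma av_lt_1_iff:
  assumes "x \<in> F"
  shows "av x < 1 \<longleftrightarrow> av x \<le> inverse q"
proof
  assume "av x < 1"
  show "av x \<le> inverse q"
  proof (cases "x = 0")
    case False
    then obtain n :: int where n: "av x = q powi n"
      using value_group assms by blast
    have "n \<le> - 1"
    proof (rule ccontr)
      assume "\<not> n \<le> - 1"
      then have "1 \<le> q powi n"
        using q_gt_1 by (intro one_le_power_int) auto
      with n \<open>av x < 1\<close> show False
        by simp
    qed
    then have "q powi n \<le> q powi (- 1)"
      using q_gt_1 by (intro power_int_increasing) auto
    with n show ?thesis
      by simp
  qed simp
qed (use inverse_q_less_1 in simp)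

definition unif :: 'a where
  "unif = (SOME p. p \<in> F \<and> av p = inverse q)"

lemma unif_mem: "unif \<in> F" and av_unif: "av unif = inverse q"
proof -
  have "q powi (- 1) \<in> av ` (F - {0})"
    unfolding value_group by (rule rangeI)
  then have "\<exists>p. p \<in> F \<and> av p = inverse q"
    by auto
  then have "unif \<in> F \<and> av unif = inverse q"
    unfolding unif_def by (rule someI_ex)
  then show "unif \<in> F" "av unif = inverse q"
    by auto
qed

lemma unif_nonzero: "unif \<noteq> 0"
  using av_unif q_gt_1 by auto

lemma av_unif_power: "av (unif ^ n) = inverse q ^ n"
  by (simp add: av_power unif_mem av_unif)

lemma residue_card_eq_card_ball_classes: "residue_card F av = card (ball_classes (inverse q))"
proof -
  have "{y \<in> F. av y \<le> 1 \<and> av (y - x) < 1} = ball_class (inverse q) x" if "x \<in> F" for x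
    using that av_lt_1_iff by (auto simp: ball_class_def integers_iff diff_closed)
  then show ?thesis
    unfolding residue_card_def ball_classes_def integers_def by (metis (no_types, lifting) image_cong mem_Collect_eq)
qed

lemma residue_representatives:
  obtains R where "finite R" "card R = residue_card F av" "R \<subseteq> integers"
    "\<And>z. z \<in> integers \<Longrightarrow> \<exists>r\<in>R. av (z - r) < 1"
    "\<And>r r'. r \<in> R \<Longrightarrow> r' \<in> R \<Longrightarrow> av (r - r') < 1 \<Longrightarrow> r = r'"
proof -
  obtain R where R: "R \<subseteq> integers" "card R = card (ball_classes (inverse q))"
    "\<forall>z\<in>integers. \<exists>r\<in>R. av (z - r) \<le> inverse q" "\<forall>r\<in>R. \<forall>r'\<in>R. av (r - r') \<le> inverse q \<longrightarrow> r = r'"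
    using ex_ball_class_representatives[OF less_imp_le[OF inverse_q_pos]] by blast
  note R(2)[folded residue_card_eq_card_ball_classes]
  have fin: "finite R"
    using \<open>card R = residue_card F av\<close> residue_card_ge_2 card.infinite by fastforce
  have lt_1: "av (x - y) < 1 \<longleftrightarrow> av (x - y) \<le> inverse q"
    if "x \<in> integers" "y \<in> integers" for x y
    using that by (intro av_lt_1_iff) (auto simp: integers_iff diff_closed)
  have cover: "\<exists>r\<in>R. av (z - r) < 1" if z: "z \<in> integers" for z
  proof -
    obtain r where "r \<in> R" "av (z - r) \<le> inverse q"
      using R(3) z by blast
    then show ?thesis
      using lt_1[OF z subsetD[OF R(1)]] by blast
  qed
  have separate: "r = r'" if "r \<in> R" "r' \<in> R" "av (r - r') < 1" for r r'
    using R(4) lt_1[OF subsetD[OF R(1)] subsetD[OF R(1)]] that by blast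
  show ?thesis
    by (rule that[OF fin \<open>card R = residue_card F av\<close> R(1) cover separate])
qed

lemma av_eq_inverse_q_power:
  assumes "x \<in> F" "x \<noteq> 0" "av x \<le> 1"
  obtains e where "av x = inverse q ^ e"
proof -
  obtain n :: int where n: "av x = q powi n"
    using value_group assms(1,2) by blast
  have "n \<le> 0"
  proof (rule ccontr)
    assume "\<not> n \<le> 0"
    then have "q powi 0 < q powi n"
      using q_gt_1 by (intro power_int_strict_increasing) auto
    with n assms(3) show False
      by simp
  qed
  then have "av x = inverse q ^ nat (- n)"
    using n by (simp add: power_int_def power_inverse)
  then show ?thesis
    by (rule that)
qed

lemma unif_power_integers: "unif ^ j \<in> integers"
  using inverse_q_pos inverse_q_less_1
  by (simp add: integers_iff unif_mem power_closed av_unif_power power_le_one)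

lemma digit_sum_integers:
  assumes "\<And>j. j < e \<Longrightarrow> r j \<in> integers"
  shows "(\<Sum>j<e. r j * unif ^ j) \<in> integers"
  using assms unif_power_integers by (intro integers_sum_closed integers_mult_closed) auto

lemma digit_expansion_exists:
  assumes "z \<in> integers" "R \<subseteq> integers"
    and cover: "\<And>a. a \<in> integers \<Longrightarrow> \<exists>r\<in>R. av (a - r) < 1"
  shows "\<exists>r. (\<forall>j<e. r j \<in> R) \<and> av (z - (\<Sum>j<e. r j * unif ^ j)) \<le> inverse q ^ e"
proof (induction e)
  case 0
  show ?case
    using assms(1) by (simp add: integers_iff)
next
  case (Suc e)
  then obtain r where r: "\<forall>j<e. r j \<in> R" and close: "av (z - (\<Sum>j<e. r j * unif ^ j)) \<le> inverse q ^ e"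
    by blast
  define w where "w = (z - (\<Sum>j<e. r j * unif ^ j)) / unif ^ e"
  have rest: "z - (\<Sum>j<e. r j * unif ^ j) \<in> integers"
    using assms(1,2) r by (intro integers_diff_closed digit_sum_integers) auto
  then have "av w = av (z - (\<Sum>j<e. r j * unif ^ j)) / inverse q ^ e"
    by (simp add: w_def av_divide integers_iff unif_mem power_closed av_unif_power)
  with close have "w \<in> integers"
    using rest inverse_q_pos unif_mem
    by (auto simp: integers_iff w_def divide_closed power_closed divide_le_eq_1)
  then obtain \<rho> where \<rho>: "\<rho> \<in> R" "av (w - \<rho>) < 1"
    using cover by blast
  then have w\<rho>: "w - \<rho> \<in> F" "av (w - \<rho>) \<le> inverse q"
    using \<open>w \<in> integers\<close> assms(2) av_lt_1_iff by (auto simp: integers_iff diff_closed)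
  define r' where "r' = r(e := \<rho>)"
  have "(\<Sum>j<Suc e. r' j * unif ^ j) = (\<Sum>j<e. r j * unif ^ j) + \<rho> * unif ^ e"
    by (simp add: r'_def)
  then have "z - (\<Sum>j<Suc e. r' j * unif ^ j) = unif ^ e * (w - \<rho>)"
    using unif_nonzero by (simp add: w_def field_simps)
  then have "av (z - (\<Sum>j<Suc e. r' j * unif ^ j)) = inverse q ^ e * av (w - \<rho>)"
    using w\<rho> by (simp add: av_mult unif_mem power_closed av_unif_power)
  also have "\<dots> \<le> inverse q ^ Suc e"
    using w\<rho> inverse_q_pos by (simp add: mult_left_mono)
  finally show ?case
    using r \<rho>(1) by (intro exI[of _ r']) (auto simp: r'_def less_Suc_eq)
qed

lemma digit_expansion_unique:
  assumes "R \<subseteq> integers"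
    and separate: "\<And>r r'. r \<in> R \<Longrightarrow> r' \<in> R \<Longrightarrow> av (r - r') < 1 \<Longrightarrow> r = r'"
  shows "\<forall>j<e. r j \<in> R \<Longrightarrow> \<forall>j<e. r' j \<in> R \<Longrightarrow>
    av ((\<Sum>j<e. r j * unif ^ j) - (\<Sum>j<e. r' j * unif ^ j)) \<le> inverse q ^ e \<Longrightarrow> \<forall>j<e. r j = r' j"
proof (induction e arbitrary: r r')
  case (Suc e)
  define D where "D = (\<Sum>j<e. r (Suc j) * unif ^ j) - (\<Sum>j<e. r' (Suc j) * unif ^ j)"
  have D: "D \<in> integers"
    unfolding D_def using Suc.prems(1,2) assms(1)
    by (intro integers_diff_closed digit_sum_integers) auto
  have r0: "r 0 - r' 0 \<in> integers"
    using Suc.prems(1,2) assms(1) by (intro integers_diff_closed) auto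
  have split: "(\<Sum>j<Suc e. r j * unif ^ j) - (\<Sum>j<Suc e. r' j * unif ^ j) = (r 0 - r' 0) + unif * D"
    unfolding D_def sum.lessThan_Suc_shift by (simp add: algebra_simps sum_distrib_left)
  have av_unif_D: "av (unif * D) = inverse q * av D"
    using D by (simp add: av_mult unif_mem av_unif integers_iff)
  have "r 0 = r' 0"
  proof (rule separate)
    show "av (r 0 - r' 0) < 1"
    proof (rule ccontr)
      assume "\<not> av (r 0 - r' 0) < 1"
      then have "av (r 0 - r' 0) = 1"
        using r0 by (simp add: integers_iff)
      moreover have "av (unif * D) < 1"
        using av_unif_D D inverse_q_pos inverse_q_less_1
        by (simp add: integers_iff mult_le_one le_less_trans[OF _ inverse_q_less_1])
      ultimately have "av ((r 0 - r' 0) + unif * D) = 1"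
        using av_add_eq_left r0 D unif_mem by (simp add: integers_iff mult_closed)
      moreover have "inverse q ^ Suc e < 1"
        by (rule power_Suc_less_one[OF inverse_q_pos inverse_q_less_1])
      ultimately show False
        using Suc.prems(3) split by simp
    qed
  qed (use Suc.prems in auto)
  then have "inverse q * av D \<le> inverse q * inverse q ^ e"
    using Suc.prems(3) split av_unif_D by simp
  then have "av D \<le> inverse q ^ e"
    using inverse_q_pos by simp
  moreover have "\<forall>j<e. r (Suc j) \<in> R" "\<forall>j<e. r' (Suc j) \<in> R"
    using Suc.prems(1,2) by auto
  ultimately have "\<forall>j<e. r (Suc j) = r' (Suc j)"
    unfolding D_def by (intro Suc.IH)
  with \<open>r 0 = r' 0\<close> show ?case
    by (metis less_Suc_eq_0_disj)
qed simp

lemma card_ball_classes_power: "card (ball_classes (inverse q ^ e)) = residue_card F av ^ e"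
proof -
  obtain R where R: "finite R" "card R = residue_card F av" "R \<subseteq> integers"
    "\<And>z. z \<in> integers \<Longrightarrow> \<exists>r\<in>R. av (z - r) < 1"
    "\<And>r r'. r \<in> R \<Longrightarrow> r' \<in> R \<Longrightarrow> av (r - r') < 1 \<Longrightarrow> r = r'"
    using residue_representatives by blast
  have "card (ball_classes (inverse q ^ e)) = card R ^ e"
  proof (rule card_ball_classes_combinations)
    show "0 \<le> inverse q ^ e"
      using inverse_q_pos by simp
    show "(\<Sum>j<e. r j * unif ^ j) \<in> integers" if "\<forall>j<e. r j \<in> R" for r
      using that R(3) by (intro digit_sum_integers) auto
    show "\<exists>r. (\<forall>j<e. r j \<in> R) \<and> av (z - (\<Sum>j<e. r j * unif ^ j)) \<le> inverse q ^ e"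
      if "z \<in> integers" for z
      by (rule digit_expansion_exists[OF that R(3,4)])
    show "\<forall>j<e. r j = r' j" if "\<forall>j<e. r j \<in> R" "\<forall>j<e. r' j \<in> R"
      "av ((\<Sum>j<e. r j * unif ^ j) - (\<Sum>j<e. r' j * unif ^ j)) \<le> inverse q ^ e" for r r'
      using that digit_expansion_unique[OF R(3,5)] by blast
  qed
  with R(2) show ?thesis
    by simp
qed

lemma geometric_tail_bound:
  assumes seq: "\<And>n. s n \<in> F" and step: "\<And>n. av (s (Suc n) - s n) \<le> inverse q ^ n"
  shows "n \<le> m \<Longrightarrow> av (s m - s n) \<le> inverse q ^ n"
proof (induction m rule: dec_induct)
  case (step m)
  have "av ((s (Suc m) - s m) + (s m - s n)) \<le> max (av (s (Suc m) - s m)) (av (s m - s n))"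
    using seq by (intro av_add diff_closed)
  moreover have "inverse q ^ m \<le> inverse q ^ n"
    using step.hyps inverse_q_pos inverse_q_less_1 by (intro power_decreasing) auto
  ultimately show ?case
    using step.IH assms(2)[of m] by simp
qed simp

lemma geometric_cauchy_limit:
  assumes seq: "\<And>n. s n \<in> F" and step: "\<And>n. av (s (Suc n) - s n) \<le> inverse q ^ n"
  obtains l where "l \<in> F" "\<And>n. av (s n - l) \<le> inverse q ^ n"
proof -
  note tail = geometric_tail_bound[OF seq step]
  have cauchy: "\<forall>e>0. \<exists>N. \<forall>i\<ge>N. \<forall>j\<ge>N. av (s i - s j) < e"
  proof (intro allI impI)
    fix e :: real
    assume "e > 0"
    then obtain N where N: "inverse q ^ N < e"
      using real_arch_pow_inv inverse_q_less_1 by blast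
    have "av (s i - s j) < e" if "N \<le> i" "N \<le> j" for i j
    proof -
      have "av (s i - s j) \<le> inverse q ^ min i j"
        using tail[of j i] tail[of i j] av_minus_commute[OF seq seq] by (cases "i \<le> j") auto
      also have "\<dots> \<le> inverse q ^ N"
        using that inverse_q_pos inverse_q_less_1 by (intro power_decreasing) auto
      finally show ?thesis
        using N by simp
    qed
    then show "\<exists>N. \<forall>i\<ge>N. \<forall>j\<ge>N. av (s i - s j) < e"
      by blast
  qed
  have "(\<forall>n. s n \<in> F) \<and> (\<forall>e>0. \<exists>N. \<forall>i\<ge>N. \<forall>j\<ge>N. av (s i - s j) < e) \<longrightarrow>
      (\<exists>l\<in>F. \<forall>e>0. \<exists>N. \<forall>n\<ge>N. av (s n - l) < e)"
    using complete unfolding abs_complete_def by (rule spec)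
  then obtain l where l: "l \<in> F" "\<forall>e>0. \<exists>N. \<forall>n\<ge>N. av (s n - l) < e"
    using cauchy seq by blast
  have "av (s n - l) \<le> inverse q ^ n" for n
  proof (rule ccontr)
    assume far: "\<not> av (s n - l) \<le> inverse q ^ n"
    then obtain N where N: "\<forall>m\<ge>N. av (s m - l) < av (s n - l) - inverse q ^ n"
      using l(2) by (meson diff_gt_0_iff_gt not_le)
    define M where "M = max N n"
    have "av ((s n - s M) + (s M - l)) \<le> max (av (s n - s M)) (av (s M - l))"
      using seq l(1) by (intro av_add diff_closed)
    moreover have "av (s n - s M) \<le> inverse q ^ n"
      using tail[of n M] av_minus_commute[OF seq seq] by (simp add: M_def)
    moreover have "av (s M - l) < av (s n - l) - inverse q ^ n"
      using N by (simp add: M_def)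
    moreover have "0 < inverse q ^ n"
      using inverse_q_pos by simp
    ultimately show False
      using far by (simp add: max_def split: if_splits)
  qed
  with l(1) show ?thesis
    by (rule that)
qed

lemma nonarch_abs_eq_powr:
  assumes nonarch': "nonarch_abs F av'"
    and same_ball: "\<And>x. x \<in> F \<Longrightarrow> av' x < 1 \<longleftrightarrow> av x < 1"
  obtains c where "c > 0" "\<And>x. x \<in> F \<Longrightarrow> av' x = av x powr c"
proof -
  interpret av': nonarch_subfield F av'
    using nonarch' by unfold_locales
  have "av' unif < 1"
    using same_ball unif_mem av_unif inverse_q_less_1 by simp
  moreover have "av' unif > 0"
    using av'.av_pos unif_nonzero unif_mem by simp
  ultimately obtain c where c: "c > 0" "av' unif = q powr (- c)"
    using q_gt_1 by (intro that[of "- log q (av' unif)"]) auto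
  have "av' x = av x powr c" if x: "x \<in> F" for x
  proof (cases "x = 0")
    case False
    then obtain n :: int where n: "av x = q powi n"
      using value_group x by blast
    define u where "u = x * unif powi n"
    have u: "u \<in> F" "u \<noteq> 0"
      using x False unif_mem unif_nonzero by (auto simp: u_def mult_closed power_int_closed)
    have "av u = 1"
      using x n unif_mem q_gt_1
      by (simp add: u_def av_mult av_power_int av_unif power_int_closed power_int_inverse
          power_int_mult_distrib[symmetric])
    then have "av' u = 1"
      using same_open_ball_av_eq_1_iff[OF nonarch' same_ball u] by simp
    moreover have "x = u * unif powi (- n)"
      using unif_nonzero by (simp add: u_def power_int_minus field_simps)
    ultimately have "av' x = av' unif powi (- n)"
      using u unif_mem by (simp add: av'.av_mult av'.av_power_int power_int_closed)
    also have "\<dots> = (q powr (- c)) powr real_of_int (- n)"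
      using c(2) powr_real_of_int'[of "q powr (- c)" "- n"] q_gt_1 by simp
    also have "\<dots> = (q powr real_of_int n) powr c"
      by (simp add: powr_powr mult.commute)
    finally show ?thesis
      using n powr_real_of_int'[of q n] q_gt_1 by simp
  qed (use c in simp)
  with c(1) show ?thesis
    by (rule that)
qed

end

section \<open>Finite extensions of local fields\<close>

locale local_extension = k: local_subfield k avk + L: local_subfield L avL
  for k L :: "'a::field set" and avk avL +
  fixes d :: nat
  assumes degree: "ext_degree k L d"
    and same_open_ball: "\<And>x. x \<in> k \<Longrightarrow> avL x < 1 \<longleftrightarrow> avk x < 1"
begin

lemma subset: "k \<subseteq> L"
  using degree unfolding ext_degree_def by simp

definition expo :: real where
  "expo = (SOME c. c > 0 \<and> (\<forall>x\<in>k. avL x = avk x powr c))"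

lemma expo_pos: "expo > 0" and avL_eq_powr: "x \<in> k \<Longrightarrow> avL x = avk x powr expo"
proof -
  obtain c where "c > 0" "\<And>x. x \<in> k \<Longrightarrow> avL x = avk x powr c"
    using k.nonarch_abs_eq_powr[OF nonarch_abs_subset[OF L.nonarch subset]] same_open_ball by blast
  then have "\<exists>c. c > 0 \<and> (\<forall>x\<in>k. avL x = avk x powr c)"
    by blast
  then have "expo > 0 \<and> (\<forall>x\<in>k. avL x = avk x powr expo)"
    unfolding expo_def by (rule someI_ex)
  then show "expo > 0" "x \<in> k \<Longrightarrow> avL x = avk x powr expo"
    by auto
qed

abbreviation p :: 'a where
  "p \<equiv> k.unif"

definition lam :: real where
  "lam = avL p"

lemma p_mem: "p \<in> k" "p \<in> L"
  using k.unif_mem subset by auto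

lemma lam_eq_powr: "lam = inverse k.q powr expo"
  using avL_eq_powr[OF p_mem(1)] by (simp add: lam_def k.av_unif)

lemma lam_pos: "0 < lam" and lam_less_1: "lam < 1"
  using k.inverse_q_pos k.inverse_q_less_1 expo_pos by (simp_all add: lam_eq_powr powr01_less_one)

lemma avL_power_p: "avL (p ^ n) = lam ^ n"
  using L.av_power[OF p_mem(2)] by (simp add: lam_def)

lemma integers_subset: "k.integers \<subseteq> L.integers"
  using subset expo_pos by (auto simp: k.integers_iff L.integers_iff avL_eq_powr powr_le1)

lemma avL_le_lam:
  assumes "a \<in> k" "avk a < 1"
  shows "avL a \<le> lam"
proof -
  have "avk a \<le> inverse k.q"
    using assms k.av_lt_1_iff by simp
  then show ?thesis
    using assms(1) expo_pos by (simp add: avL_eq_powr lam_eq_powr powr_mono2)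
qed

lemma avL_mult_le_lam:
  assumes "a \<in> k" "avk a < 1" "y \<in> L.integers"
  shows "avL (a * y) \<le> lam"
proof -
  have "a \<in> L" "y \<in> L" "avL y \<le> 1"
    using assms subset by (auto simp: L.integers_iff)
  then have "avL (a * y) \<le> avL a"
    by (simp add: L.av_mult mult_left_le)
  also have "\<dots> \<le> lam"
    using assms(1,2) by (rule avL_le_lam)
  finally show ?thesis .
qed

text \<open>A family in the integers of L whose reduction modulo the ideal generated by p is independent
  over the residue field of k.\<close>
definition reduced_indep :: "nat \<Rightarrow> (nat \<Rightarrow> 'a) \<Rightarrow> bool" where
  "reduced_indep r y \<longleftrightarrow> (\<forall>i<r. y i \<in> L.integers) \<and>
     (\<forall>a. (\<forall>i<r. a i \<in> k.integers) \<and> avL (\<Sum>i<r. a i * y i) \<le> lam \<longrightarrow> (\<forall>i<r. avk (a i) < 1))"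

lemma reduced_indepD:
  assumes "reduced_indep r y" "\<forall>i<r. a i \<in> k.integers" "avL (\<Sum>i<r. a i * y i) \<le> lam" "i < r"
  shows "avk (a i) < 1"
  using assms unfolding reduced_indep_def by blast

lemma reduced_indep_lin_indep:
  assumes "reduced_indep r y"
  shows "lin_indep k {..<r} y"
  unfolding lin_indep_def
proof (intro allI impI ballI)
  fix g j
  assume g: "(\<forall>j\<in>{..<r}. g j \<in> k) \<and> (\<Sum>j\<in>{..<r}. g j * y j) = 0" and j: "j \<in> {..<r}"
  show "g j = 0"
  proof (rule ccontr)
    assume "g j \<noteq> 0"
    define M where "M = Max ((\<lambda>i. avk (g i)) ` {..<r})"
    have "M \<in> (\<lambda>i. avk (g i)) ` {..<r}"
      unfolding M_def using j by (intro Max_in) auto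
    then obtain i0 where "i0 < r" "avk (g i0) = M"
      by auto
    moreover have "avk (g i) \<le> M" if "i < r" for i
      unfolding M_def using that by (intro Max_ge) auto
    ultimately have i0: "i0 < r" "\<And>i. i < r \<Longrightarrow> avk (g i) \<le> avk (g i0)"
      by auto
    have "avk (g i0) > 0"
      using i0(2)[of j] j g k.av_pos[OF _ \<open>g j \<noteq> 0\<close>] by force
    then have "g i0 \<noteq> 0" "g i0 \<in> k"
      using g i0(1) by auto
    define a where "a i = g i / g i0" for i
    have "\<forall>i<r. a i \<in> k.integers"
      using g i0 \<open>avk (g i0) > 0\<close> by (auto simp: a_def k.integers_iff k.divide_closed k.av_divide)
    moreover have "(\<Sum>i<r. a i * y i) = 0"
      using g by (simp add: a_def sum_divide_distrib[symmetric] lessThan_def)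
    ultimately have "avk (a i0) < 1"
      using reduced_indepD[OF assms] i0(1) lam_pos by simp
    moreover have "a i0 = 1"
      using \<open>g i0 \<noteq> 0\<close> by (simp add: a_def)
    ultimately show False
      by simp
  qed
qed

lemma reduced_indep_le_degree:
  assumes "reduced_indep r y"
  shows "r \<le> d"
proof -
  obtain b where "\<forall>i<d. b i \<in> L" "lin_indep k {..<d} b" and b: "\<forall>x\<in>L. in_span k {..<d} b x"
    by (rule k.ext_degree_basis[OF degree])
  have "\<forall>j\<in>{..<r}. in_span k {..<d} b (y j)"
    using assms b by (auto simp: reduced_indep_def L.integers_iff)
  then have "card {..<r} \<le> card {..<d}"
    using k.card_le_if_lin_indep_in_span reduced_indep_lin_indep[OF assms] by blast
  then show ?thesis
    by simp
qed

definition red_dim :: nat where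
  "red_dim = Max {r. \<exists>y. reduced_indep r y}"

definition red_basis :: "nat \<Rightarrow> 'a" where
  "red_basis = (SOME y. reduced_indep red_dim y)"

lemma red_basis: "reduced_indep red_dim red_basis"
  and red_dim_maximal: "\<not> reduced_indep (Suc red_dim) y"
proof -
  define S where "S = {r. \<exists>y. reduced_indep r y}"
  have "finite S"
    using reduced_indep_le_degree by (intro finite_subset[of S "{..d}"]) (auto simp: S_def)
  moreover have "0 \<in> S"
    by (auto simp: S_def reduced_indep_def)
  ultimately have "red_dim \<in> S"
    unfolding red_dim_def S_def[symmetric] by (intro Max_in) auto
  then have "\<exists>y. reduced_indep red_dim y"
    by (simp add: S_def)
  then show "reduced_indep red_dim red_basis"
    unfolding red_basis_def by (rule someI_ex)
  show "\<not> reduced_indep (Suc red_dim) y"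
    using Max_ge[OF \<open>finite S\<close>, of "Suc red_dim"] unfolding red_dim_def S_def by auto
qed

lemma red_basis_integers: "i < red_dim \<Longrightarrow> red_basis i \<in> L.integers"
  using red_basis by (simp add: reduced_indep_def)

lemma red_basis_combination_integers:
  "(\<And>i. i < red_dim \<Longrightarrow> a i \<in> k.integers) \<Longrightarrow> (\<Sum>i<red_dim. a i * red_basis i) \<in> L.integers"
  using integers_subset red_basis_integers by (intro L.integers_sum_closed L.integers_mult_closed) auto

lemma red_basis_coeffs_close:
  assumes "\<forall>i<red_dim. a i \<in> k.integers" "\<forall>i<red_dim. a' i \<in> k.integers"
    and "avL ((\<Sum>i<red_dim. a i * red_basis i) - (\<Sum>i<red_dim. a' i * red_basis i)) \<le> lam"
  shows "\<forall>i<red_dim. avk (a i - a' i) < 1"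
proof -
  have "(\<Sum>i<red_dim. a i * red_basis i) - (\<Sum>i<red_dim. a' i * red_basis i)
      = (\<Sum>i<red_dim. (a i - a' i) * red_basis i)"
    by (simp add: sum_subtractf left_diff_distrib)
  moreover have "\<forall>i<red_dim. a i - a' i \<in> k.integers"
    using assms(1,2) by (simp add: k.integers_diff_closed)
  ultimately show ?thesis
    using reduced_indepD[OF red_basis, of "\<lambda>i. a i - a' i"] assms(3) by simp
qed

lemma red_basis_dependence:
  assumes z: "z \<in> L.integers"
  obtains a c where "\<forall>i<red_dim. a i \<in> k.integers" "c \<in> k" "avk c = 1"
    "avL ((\<Sum>i<red_dim. a i * red_basis i) + c * z) \<le> lam"
proof -
  define y where "y = red_basis(red_dim := z)"
  have "\<forall>i<Suc red_dim. y i \<in> L.integers"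
    using z red_basis_integers by (auto simp: y_def less_Suc_eq)
  then obtain a where a: "\<forall>i<Suc red_dim. a i \<in> k.integers" "avL (\<Sum>i<Suc red_dim. a i * y i) \<le> lam"
    and unit: "\<exists>i<Suc red_dim. \<not> avk (a i) < 1"
    using red_dim_maximal[of y] unfolding reduced_indep_def by blast
  define S where "S = (\<Sum>i<red_dim. a i * red_basis i)"
  have "(\<Sum>i<Suc red_dim. a i * y i) = S + a red_dim * z"
    by (simp add: y_def S_def)
  with a(2) have close: "avL (S + a red_dim * z) \<le> lam"
    by simp
  have ar: "a red_dim \<in> k" "avk (a red_dim) \<le> 1"
    using a(1) by (auto simp: k.integers_iff)
  have "\<not> avk (a red_dim) < 1"
  proof
    assume "avk (a red_dim) < 1"
    then have "avL (a red_dim * z) \<le> lam"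
      using avL_mult_le_lam ar(1) z by blast
    moreover have "S \<in> L.integers"
      using a(1) unfolding S_def by (intro red_basis_combination_integers) simp
    moreover have "a red_dim * z \<in> L"
      using ar(1) z subset by (auto simp: L.integers_iff L.mult_closed)
    ultimately have "avL S \<le> lam"
      using L.av_diff[of "S + a red_dim * z" "a red_dim * z"] close
      by (simp add: L.integers_iff L.add_closed)
    then have "\<forall>i<Suc red_dim. avk (a i) < 1"
      using reduced_indepD[OF red_basis] a(1) \<open>avk (a red_dim) < 1\<close> by (auto simp: S_def less_Suc_eq)
    with unit show False
      by blast
  qed
  with ar have "avk (a red_dim) = 1"
    by simp
  with a(1) ar(1) close show ?thesis
    by (intro that[of a "a red_dim"]) (auto simp: S_def)
qed

lemma red_basis_spans_mod:
  assumes z: "z \<in> L.integers"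
  shows "\<exists>b. (\<forall>i<red_dim. b i \<in> k.integers) \<and> avL (z - (\<Sum>i<red_dim. b i * red_basis i)) \<le> lam"
proof -
  obtain a c where a: "\<forall>i<red_dim. a i \<in> k.integers" and c: "c \<in> k" "avk c = 1"
    and close: "avL ((\<Sum>i<red_dim. a i * red_basis i) + c * z) \<le> lam"
    using red_basis_dependence[OF z] by blast
  define b where "b i = - a i / c" for i
  have "c \<noteq> 0" "c \<in> L" "avL c = 1"
    using c subset by (auto simp: avL_eq_powr)
  have "\<forall>i<red_dim. b i \<in> k.integers"
    using a c by (auto simp: b_def k.integers_iff k.av_divide k.divide_closed k.uminus_closed)
  moreover have "z - (\<Sum>i<red_dim. b i * red_basis i) = ((\<Sum>i<red_dim. a i * red_basis i) + c * z) / c"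
    using \<open>c \<noteq> 0\<close> by (simp add: b_def field_simps sum_divide_distrib[symmetric] sum_negf)
  moreover have "(\<Sum>i<red_dim. a i * red_basis i) + c * z \<in> L"
    using a z \<open>c \<in> L\<close> red_basis_combination_integers by (simp add: L.integers_iff L.add_closed L.mult_closed)
  ultimately show ?thesis
    using close \<open>c \<in> L\<close> \<open>avL c = 1\<close> by (auto simp: L.av_divide)
qed

lemma red_basis_step:
  assumes "z \<in> L.integers"
  shows "\<exists>a. (\<forall>i<red_dim. a i \<in> k.integers) \<and> (z - (\<Sum>i<red_dim. a i * red_basis i)) / p \<in> L.integers"
proof -
  obtain a where a: "\<forall>i<red_dim. a i \<in> k.integers" and close: "avL (z - (\<Sum>i<red_dim. a i * red_basis i)) \<le> lam"
    using red_basis_spans_mod[OF assms] by blast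
  have "z - (\<Sum>i<red_dim. a i * red_basis i) \<in> L"
    using assms a red_basis_combination_integers by (simp add: L.integers_iff L.diff_closed)
  then have "(z - (\<Sum>i<red_dim. a i * red_basis i)) / p \<in> L.integers"
    using close lam_pos p_mem(2) by (simp add: L.integers_iff L.divide_closed L.av_divide flip: lam_def)
  with a show ?thesis
    by blast
qed

text \<open>Iterating the division by p with remainder gives p-adic approximations of an integer of L.\<close>
lemma red_basis_approx:
  assumes "z \<in> L.integers"
  obtains P where "\<And>N i. i < red_dim \<Longrightarrow> P N i \<in> k" "\<And>i. P 0 i = 0"
    "\<And>N i. i < red_dim \<Longrightarrow> avk (P (Suc N) i - P N i) \<le> inverse k.q ^ N"
    "\<And>N. avL (z - (\<Sum>i<red_dim. P N i * red_basis i)) \<le> lam ^ N"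
proof -
  define coef where "coef w = (SOME a. (\<forall>i<red_dim. a i \<in> k.integers) \<and>
      (w - (\<Sum>i<red_dim. a i * red_basis i)) / p \<in> L.integers)" for w
  have coef: "(\<forall>i<red_dim. coef w i \<in> k.integers) \<and>
      (w - (\<Sum>i<red_dim. coef w i * red_basis i)) / p \<in> L.integers" if "w \<in> L.integers" for w
    unfolding coef_def by (rule someI_ex[OF red_basis_step[OF that]])
  define nxt where "nxt w = (w - (\<Sum>i<red_dim. coef w i * red_basis i)) / p" for w
  define zs where "zs n = (nxt ^^ n) z" for n
  have zs: "zs n \<in> L.integers" for n
    by (induction n) (use assms coef in \<open>auto simp: zs_def nxt_def\<close>)
  define P where "P N i = (\<Sum>j<N. p ^ j * coef (zs j) i)" for N i
  have digit: "coef (zs N) i \<in> k.integers" if "i < red_dim" for N i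
    using coef[OF zs] that by blast
  have expansion: "z = (\<Sum>i<red_dim. P N i * red_basis i) + p ^ N * zs N" for N
  proof (induction N)
    case (Suc N)
    have step: "zs N = (\<Sum>i<red_dim. coef (zs N) i * red_basis i) + p * zs (Suc N)"
      using k.unif_nonzero by (simp add: zs_def nxt_def)
    have "(\<Sum>i<red_dim. P (Suc N) i * red_basis i)
        = (\<Sum>i<red_dim. P N i * red_basis i) + p ^ N * (\<Sum>i<red_dim. coef (zs N) i * red_basis i)"
      by (simp add: P_def distrib_right sum.distrib sum_distrib_left mult.assoc)
    then show ?case
      using Suc.IH by (subst (asm) step) (simp add: algebra_simps)
  qed (simp add: P_def zs_def)
  show ?thesis
  proof (rule that)
    show "P N i \<in> k" if "i < red_dim" for N i
      using digit[OF that] k.unif_mem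
      by (auto simp: P_def k.integers_iff intro!: k.sum_closed k.mult_closed k.power_closed)
    show "P 0 i = 0" for i
      by (simp add: P_def)
    show "avk (P (Suc N) i - P N i) \<le> inverse k.q ^ N" if "i < red_dim" for N i
      using digit[OF that] k.inverse_q_pos
      by (simp add: P_def k.av_mult k.av_unif_power k.unif_mem k.power_closed k.integers_iff mult_left_le)
    show "avL (z - (\<Sum>i<red_dim. P N i * red_basis i)) \<le> lam ^ N" for N
      using expansion[of N] zs[of N] p_mem(2) lam_pos
      by (simp add: L.av_mult avL_power_p L.power_closed L.integers_iff mult_left_le)
  qed
qed

lemma red_basis_combination_small:
  assumes "\<And>i. i < red_dim \<Longrightarrow> c i \<in> k" "\<And>i. i < red_dim \<Longrightarrow> avk (c i) \<le> inverse k.q ^ N"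
  shows "avL (\<Sum>i<red_dim. c i * red_basis i) \<le> lam ^ N"
proof (rule L.av_sum_le)
  fix i
  assume "i \<in> {..<red_dim}"
  then have i: "c i \<in> L" "red_basis i \<in> L.integers" "avk (c i) \<le> inverse k.q ^ N"
    using assms red_basis_integers subset by auto
  then show "c i * red_basis i \<in> L"
    by (simp add: L.integers_iff L.mult_closed)
  have "avL (c i * red_basis i) \<le> avL (c i)"
    using i by (simp add: L.av_mult L.integers_iff mult_left_le)
  also have "\<dots> = avk (c i) powr expo"
    using assms(1) \<open>i \<in> {..<red_dim}\<close> by (simp add: avL_eq_powr)
  also have "\<dots> \<le> (inverse k.q ^ N) powr expo"
    using i(3) expo_pos assms(1) \<open>i \<in> {..<red_dim}\<close> by (simp add: powr_mono2)
  also have "\<dots> = lam ^ N"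
    using k.inverse_q_pos by (simp add: lam_eq_powr powr_realpow[symmetric] powr_powr mult.commute)
  finally show "avL (c i * red_basis i) \<le> lam ^ N" .
qed (use lam_pos in simp)

lemma red_basis_spans_integers:
  assumes z: "z \<in> L.integers"
  obtains A where "\<forall>i<red_dim. A i \<in> k.integers" "z = (\<Sum>i<red_dim. A i * red_basis i)"
proof -
  obtain P where P: "\<And>N i. i < red_dim \<Longrightarrow> P N i \<in> k" "\<And>i. P 0 i = 0"
    "\<And>N i. i < red_dim \<Longrightarrow> avk (P (Suc N) i - P N i) \<le> inverse k.q ^ N"
    "\<And>N. avL (z - (\<Sum>i<red_dim. P N i * red_basis i)) \<le> lam ^ N"
    using red_basis_approx[OF z] by blast
  have "\<exists>l. l \<in> k \<and> (\<forall>N. avk (P N i - l) \<le> inverse k.q ^ N)" if "i < red_dim" for i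
    by (rule k.geometric_cauchy_limit[of "\<lambda>N. P N i"]) (use P that in auto)
  then obtain A where A: "\<And>i. i < red_dim \<Longrightarrow> A i \<in> k" "\<And>i N. i < red_dim \<Longrightarrow> avk (P N i - A i) \<le> inverse k.q ^ N"
    by metis
  have A_integers: "\<forall>i<red_dim. A i \<in> k.integers"
    using A(1) A(2)[of _ 0] P(2) by (simp add: k.integers_iff)
  define D where "D = z - (\<Sum>i<red_dim. A i * red_basis i)"
  have D: "D \<in> L"
    using z A_integers red_basis_combination_integers by (simp add: D_def L.integers_iff L.diff_closed)
  have "avL D \<le> lam ^ N" for N
  proof -
    define E where "E = z - (\<Sum>i<red_dim. P N i * red_basis i)"
    define S where "S = (\<Sum>i<red_dim. (P N i - A i) * red_basis i)"
    have "D = E + S"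
      by (simp add: D_def E_def S_def algebra_simps sum_subtractf)
    moreover have "S \<in> L" "avL S \<le> lam ^ N"
      unfolding S_def using A P(1) red_basis_integers subset
      by (auto simp: L.integers_iff k.diff_closed intro!: red_basis_combination_small L.sum_closed
          L.mult_closed L.diff_closed)
    moreover have "E \<in> L"
      using D \<open>S \<in> L\<close> \<open>D = E + S\<close> L.diff_closed[of D S] by simp
    ultimately show ?thesis
      using L.av_add[of E S] P(4)[of N] by (simp add: E_def)
  qed
  then have "D = 0"
    using D L.av_pos[OF D] real_arch_pow_inv[OF _ lam_less_1] by (meson not_le)
  with A_integers show ?thesis
    by (intro that) (simp_all add: D_def)
qed

lemma red_basis_spans:
  assumes x: "x \<in> L"
  shows "in_span k {..<red_dim} red_basis x"
proof -
  obtain N where N: "avL (p ^ N * x) \<le> 1"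
  proof (cases "x = 0")
    case False
    then obtain N where "lam ^ N < inverse (avL x)"
      using real_arch_pow_inv[OF _ lam_less_1] L.av_pos[OF x] by (meson positive_imp_inverse_positive)
    then show ?thesis
      using L.av_pos[OF x False] p_mem(2) x
      by (intro that[of N]) (simp add: L.av_mult L.power_closed avL_power_p field_simps)
  qed (use that[of 0] in simp)
  then have "p ^ N * x \<in> L.integers"
    using x p_mem(2) by (simp add: L.integers_iff L.mult_closed L.power_closed)
  then obtain A where A: "\<forall>i<red_dim. A i \<in> k.integers" "p ^ N * x = (\<Sum>i<red_dim. A i * red_basis i)"
    by (rule red_basis_spans_integers)
  then have "x = (\<Sum>i<red_dim. (A i / p ^ N) * red_basis i)"
    using k.unif_nonzero by (simp add: sum_divide_distrib[symmetric] field_simps)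
  moreover have "\<forall>i\<in>{..<red_dim}. A i / p ^ N \<in> k"
    using A(1) p_mem(1) by (simp add: k.integers_iff k.divide_closed k.power_closed)
  ultimately show ?thesis
    unfolding in_span_def by (intro exI[of _ "\<lambda>i. A i / p ^ N"]) simp
qed

lemma red_dim_eq_degree: "red_dim = d"
proof -
  obtain b where "\<forall>i<d. b i \<in> L" "lin_indep k {..<d} b"
    by (rule k.ext_degree_basis[OF degree])
  then have "card {..<d} \<le> card {..<red_dim}"
    using red_basis_spans by (intro k.card_le_if_lin_indep_in_span) auto
  then show ?thesis
    using reduced_indep_le_degree[OF red_basis] by simp
qed

lemma degree_pos: "d > 0"
proof (rule ccontr)
  assume "\<not> d > 0"
  moreover obtain b where "\<forall>x\<in>L. in_span k {..<d} b x"
    by (rule k.ext_degree_basis[OF degree])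
  then have "in_span k {..<d} b 1"
    using L.one_closed by blast
  ultimately show False
    by (simp add: in_span_def)
qed

lemma red_basis_residues_cover:
  assumes z: "z \<in> L.integers" and R: "R \<subseteq> k.integers" "\<And>a. a \<in> k.integers \<Longrightarrow> \<exists>r\<in>R. avk (a - r) < 1"
  shows "\<exists>\<rho>. (\<forall>i<red_dim. \<rho> i \<in> R) \<and> avL (z - (\<Sum>i<red_dim. \<rho> i * red_basis i)) \<le> lam"
proof -
  obtain b where b: "\<forall>i<red_dim. b i \<in> k.integers" and close: "avL (z - (\<Sum>i<red_dim. b i * red_basis i)) \<le> lam"
    using red_basis_spans_mod[OF z] by blast
  have "\<exists>\<rho>. \<forall>i. i < red_dim \<longrightarrow> \<rho> i \<in> R \<and> avk (b i - \<rho> i) < 1"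
    by (rule choice) (use R(2) b in blast)
  then obtain \<rho> where \<rho>: "\<And>i. i < red_dim \<Longrightarrow> \<rho> i \<in> R \<and> avk (b i - \<rho> i) < 1"
    by blast
  define S where "S = (\<Sum>i<red_dim. (b i - \<rho> i) * red_basis i)"
  have diff_k: "b i - \<rho> i \<in> k" if "i < red_dim" for i
    using b \<rho>[OF that] R(1) that by (intro k.diff_closed) (auto simp: k.integers_iff)
  have "S \<in> L" "avL S \<le> lam"
    unfolding S_def using diff_k \<rho> red_basis_integers subset lam_pos
    by (auto simp: L.integers_iff intro!: L.sum_closed L.mult_closed L.av_sum_le avL_mult_le_lam)
  moreover have "z - (\<Sum>i<red_dim. b i * red_basis i) \<in> L"
    using z b red_basis_combination_integers by (simp add: L.integers_iff L.diff_closed)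
  ultimately have "avL ((z - (\<Sum>i<red_dim. b i * red_basis i)) + S) \<le> lam"
    using L.av_add[of "z - (\<Sum>i<red_dim. b i * red_basis i)" S] close by simp
  moreover have "(z - (\<Sum>i<red_dim. b i * red_basis i)) + S = z - (\<Sum>i<red_dim. \<rho> i * red_basis i)"
    by (simp add: S_def algebra_simps sum_subtractf)
  ultimately have "avL (z - (\<Sum>i<red_dim. \<rho> i * red_basis i)) \<le> lam"
    by simp
  with \<rho> show ?thesis
    by blast
qed

lemma card_ball_classes_lam: "card (L.ball_classes lam) = residue_card k avk ^ d"
proof -
  obtain R where R: "finite R" "card R = residue_card k avk" "R \<subseteq> k.integers"
    "\<And>a. a \<in> k.integers \<Longrightarrow> \<exists>r\<in>R. avk (a - r) < 1"
    "\<And>r r'. r \<in> R \<Longrightarrow> r' \<in> R \<Longrightarrow> avk (r - r') < 1 \<Longrightarrow> r = r'"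
    using k.residue_representatives by blast
  have "card (L.ball_classes lam) = card R ^ red_dim"
  proof (rule L.card_ball_classes_combinations)
    show "0 \<le> lam"
      using lam_pos by simp
    show "(\<Sum>i<red_dim. a i * red_basis i) \<in> L.integers" if "\<forall>i<red_dim. a i \<in> R" for a
      using that R(3) by (intro red_basis_combination_integers) auto
    show "\<exists>a. (\<forall>i<red_dim. a i \<in> R) \<and> avL (z - (\<Sum>i<red_dim. a i * red_basis i)) \<le> lam"
      if "z \<in> L.integers" for z
      by (rule red_basis_residues_cover[OF that R(3,4)])
    show "\<forall>i<red_dim. a i = a' i" if "\<forall>i<red_dim. a i \<in> R" "\<forall>i<red_dim. a' i \<in> R"
      "avL ((\<Sum>i<red_dim. a i * red_basis i) - (\<Sum>i<red_dim. a' i * red_basis i)) \<le> lam" for a a'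
    proof -
      have "\<forall>i<red_dim. avk (a i - a' i) < 1"
        using that R(3) by (intro red_basis_coeffs_close) auto
      with that(1,2) show ?thesis
        using R(5) by blast
    qed
  qed
  with R(2) show ?thesis
    by (simp add: red_dim_eq_degree)
qed

lemma lam_eq: "lam = inverse k.q ^ d"
proof -
  obtain e where e: "lam = inverse L.q ^ e"
    using L.av_eq_inverse_q_power[of p] p_mem(2) k.unif_nonzero lam_less_1 by (auto simp: lam_def)
  then have "residue_card L avL ^ e = residue_card k avk ^ d"
    using L.card_ball_classes_power[of e] card_ball_classes_lam by simp
  then have "L.q ^ e = k.q ^ d"
    by (metis of_nat_power)
  with e show ?thesis
    by (simp add: power_inverse)
qed

lemma expo_eq_degree: "expo = d"
proof -
  have "inverse k.q powr expo = inverse k.q powr real d"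
    using lam_eq_powr lam_eq k.inverse_q_pos by (simp add: powr_realpow)
  then show ?thesis
    using powr_inj[of "inverse k.q" expo "real d"] k.inverse_q_pos k.q_gt_1 by simp
qed

theorem avL_restrict: "x \<in> k \<Longrightarrow> avL x = avk x ^ d"
  using avL_eq_powr expo_eq_degree degree_pos by (cases "x = 0") (simp_all add: powr_realpow k.av_pos)

lemma integers_bounded:
  assumes "nonarch_subfield M av'" "L \<subseteq> M" "\<And>a. a \<in> k.integers \<Longrightarrow> av' a \<le> 1"
  obtains C where "\<And>z. z \<in> L.integers \<Longrightarrow> av' z \<le> C"
proof -
  interpret M: nonarch_subfield M av'
    by (rule assms(1))
  have basis_M: "red_basis i \<in> M" if "i < red_dim" for i
    using red_basis_integers assms(2) that by (auto simp: L.integers_iff)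
  define C where "C = (\<Sum>i<red_dim. av' (red_basis i))"
  have "av' z \<le> C" if z: "z \<in> L.integers" for z
  proof -
    obtain A where A: "\<forall>i<red_dim. A i \<in> k.integers" "z = (\<Sum>i<red_dim. A i * red_basis i)"
      using red_basis_spans_integers[OF z] by blast
    have A_M: "A i \<in> M" if "i < red_dim" for i
      using A(1) subset assms(2) that by (auto simp: k.integers_iff)
    have "av' (A i * red_basis i) \<le> C" if "i < red_dim" for i
    proof -
      have "av' (A i * red_basis i) \<le> av' (red_basis i)"
        using A(1) assms(3) A_M basis_M that by (simp add: M.av_mult mult_left_le_one_le)
      also have "\<dots> \<le> C"
        unfolding C_def using basis_M that by (intro member_le_sum) auto
      finally show ?thesis .
    qed
    moreover have "0 \<le> C"
      unfolding C_def using basis_M by (intro sum_nonneg) auto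
    ultimately show ?thesis
      unfolding A(2) using A_M basis_M by (intro M.av_sum_le) (auto intro: M.mult_closed)
  qed
  then show ?thesis
    by (rule that)
qed

end

section \<open>Ultrametric kernels are positive definite\<close>

definition quad_form :: "nat \<Rightarrow> (nat \<Rightarrow> complex) \<Rightarrow> (nat \<Rightarrow> nat \<Rightarrow> real) \<Rightarrow> complex" where
  "quad_form n c f = (\<Sum>i<n. \<Sum>j<n. c i * cnj (c j) * complex_of_real (f i j))"

lemma quad_form_cong:
  "(\<And>i j. i < n \<Longrightarrow> j < n \<Longrightarrow> f i j = g i j) \<Longrightarrow> quad_form n c f = quad_form n c g"
  by (simp add: quad_form_def)

lemma quad_form_add_scale:
  "quad_form n c (\<lambda>i j. f i j + a * g i j) = quad_form n c f + complex_of_real a * quad_form n c g"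
  by (simp add: quad_form_def sum.distrib sum_distrib_left algebra_simps)

lemma sum_kernel_of_fun:
  assumes "finite T"
  shows "(\<Sum>i\<in>T. \<Sum>j\<in>T. c i * cnj (c j) * (if h i = h j then 1 else 0))
    = (\<Sum>y\<in>h ` T. complex_of_real ((cmod (\<Sum>i\<in>{i\<in>T. h i = y}. c i))\<^sup>2))"
proof -
  have "(\<Sum>i\<in>T. \<Sum>j\<in>T. c i * cnj (c j) * (if h i = h j then 1 else 0))
      = (\<Sum>i\<in>T. c i * cnj (\<Sum>j\<in>{j\<in>T. h j = h i}. c j))"
    using assms by (simp add: sum_distrib_left cnj_sum sum.inter_filter eq_commute if_distrib
        cong: if_cong)
  also have "\<dots> = (\<Sum>y\<in>h ` T. \<Sum>i\<in>{i\<in>T. h i = y}. c i * cnj (\<Sum>j\<in>{j\<in>T. h j = y}. c j))"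
    using assms by (subst sum.image_gen[of T _ h]) simp_all
  also have "\<dots> = (\<Sum>y\<in>h ` T. complex_of_real ((cmod (\<Sum>i\<in>{i\<in>T. h i = y}. c i))\<^sup>2))"
    by (simp only: sum_distrib_right[symmetric] complex_norm_square)
  finally show ?thesis .
qed

lemma equivalence_on_iff_same_class:
  assumes sym: "\<And>i j. i < n \<Longrightarrow> j < n \<Longrightarrow> R i j \<Longrightarrow> R j i"
    and trans: "\<And>i j l. i < n \<Longrightarrow> j < n \<Longrightarrow> l < n \<Longrightarrow> R i j \<Longrightarrow> R j l \<Longrightarrow> R i l"
    and "i < n" "j < n"
  shows "R i j \<longleftrightarrow> R i i \<and> R j j \<and> {x. x < n \<and> R i x} = {x. x < n \<and> R j x}"
proof
  assume "R i j"
  then have "R j i" "R i i" "R j j"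
    using sym trans assms(3,4) by blast+
  moreover have "R i x \<longleftrightarrow> R j x" if "x < n" for x
    using trans[OF assms(3,4) that \<open>R i j\<close>] trans[OF assms(4,3) that \<open>R j i\<close>] by blast
  ultimately show "R i i \<and> R j j \<and> {x. x < n \<and> R i x} = {x. x < n \<and> R j x}"
    by auto
next
  assume "R i i \<and> R j j \<and> {x. x < n \<and> R i x} = {x. x < n \<and> R j x}"
  then show "R i j"
    using assms(4) by blast
qed

lemma equivalence_kernel_psd:
  assumes sym: "\<And>i j. i < n \<Longrightarrow> j < n \<Longrightarrow> R i j \<Longrightarrow> R j i"
    and trans: "\<And>i j l. i < n \<Longrightarrow> j < n \<Longrightarrow> l < n \<Longrightarrow> R i j \<Longrightarrow> R j l \<Longrightarrow> R i l"
  shows "Im (quad_form n c (\<lambda>i j. if R i j then 1 else 0)) = 0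
    \<and> 0 \<le> Re (quad_form n c (\<lambda>i j. if R i j then 1 else 0))"
proof -
  define T where "T = {i. i < n \<and> R i i}"
  define cls where "cls i = {j. j < n \<and> R i j}" for i
  have R_iff: "R i j \<longleftrightarrow> i \<in> T \<and> j \<in> T \<and> cls i = cls j" if "i < n" "j < n" for i j
    using equivalence_on_iff_same_class[OF sym trans that] that by (simp add: T_def cls_def)
  have "quad_form n c (\<lambda>i j. if R i j then 1 else 0)
      = (\<Sum>i\<in>T. \<Sum>j\<in>T. c i * cnj (c j) * (if cls i = cls j then 1 else 0))"
    unfolding quad_form_def
  proof (rule sum.mono_neutral_cong_right)
    show "\<forall>i\<in>{..<n} - T. (\<Sum>j<n. c i * cnj (c j) * complex_of_real (if R i j then 1 else 0)) = 0"
      using R_iff by simp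
    show "(\<Sum>j<n. c i * cnj (c j) * complex_of_real (if R i j then 1 else 0))
        = (\<Sum>j\<in>T. c i * cnj (c j) * (if cls i = cls j then 1 else 0))" if "i \<in> T" for i
    proof (rule sum.mono_neutral_cong_right)
      have "i < n"
        using that by (simp add: T_def)
      then show "\<forall>j\<in>{..<n} - T. c i * cnj (c j) * complex_of_real (if R i j then 1 else 0) = 0"
        using R_iff by simp
      show "c i * cnj (c j) * complex_of_real (if R i j then 1 else 0)
          = c i * cnj (c j) * (if cls i = cls j then 1 else 0)" if "j \<in> T" for j
        using R_iff[of i j] \<open>i < n\<close> \<open>i \<in> T\<close> \<open>j \<in> T\<close> that by (simp add: T_def)
    qed (auto simp: T_def)
  qed (auto simp: T_def)
  also have "\<dots> = (\<Sum>y\<in>cls ` T. complex_of_real ((cmod (\<Sum>i\<in>{i\<in>T. cls i = y}. c i))\<^sup>2))"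
    by (rule sum_kernel_of_fun) (simp add: T_def)
  finally show ?thesis
    by (simp add: sum_nonneg)
qed

definition ultrametric_kernel :: "nat \<Rightarrow> (nat \<Rightarrow> nat \<Rightarrow> real) \<Rightarrow> bool" where
  "ultrametric_kernel n f \<longleftrightarrow> (\<forall>i<n. \<forall>j<n. 0 \<le> f i j \<and> f i j = f j i) \<and>
     (\<forall>i<n. \<forall>j<n. \<forall>l<n. min (f i j) (f j l) \<le> f i l)"

lemma ultrametric_kernel_min:
  "ultrametric_kernel n f \<Longrightarrow> 0 \<le> a \<Longrightarrow> ultrametric_kernel n (\<lambda>i j. min (f i j) a)"
  unfolding ultrametric_kernel_def by (smt (verit))

lemma ultrametric_kernel_psd_values:
  assumes "finite V" "V \<subseteq> {0<..}"
  shows "ultrametric_kernel n f \<Longrightarrow> \<forall>i<n. \<forall>j<n. f i j \<in> insert 0 V \<Longrightarrow>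
    Im (quad_form n c f) = 0 \<and> 0 \<le> Re (quad_form n c f)"
  using assms
proof (induction V arbitrary: f rule: finite_linorder_max_induct)
  case empty
  then have "quad_form n c f = quad_form n c (\<lambda>_ _. 0)"
    by (intro quad_form_cong) simp
  then show ?case
    by (simp add: quad_form_def)
next
  case (insert b A)
  txt \<open>Peel off the largest value b: f = min f a + (b - a) [b \<le> f], where a is the next value below
    b; the indicator is an equivalence relation by the ultrametric inequality.\<close>
  define a where "a = Max (insert 0 A)"
  have a: "0 \<le> a" "a < b" "\<And>v. v \<in> A \<Longrightarrow> v \<le> a"
    using insert.hyps insert.prems(3) by (auto simp: a_def)
  have "quad_form n c f = quad_form n c (\<lambda>i j. min (f i j) a + (b - a) * (if b \<le> f i j then 1 else 0))"
    using insert.prems(2) a by (intro quad_form_cong) (fastforce simp: min_def)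
  also have "\<dots> = quad_form n c (\<lambda>i j. min (f i j) a)
      + complex_of_real (b - a) * quad_form n c (\<lambda>i j. if b \<le> f i j then 1 else 0)"
    by (rule quad_form_add_scale)
  finally have split: "quad_form n c f = \<dots>" .
  have "Im (quad_form n c (\<lambda>i j. min (f i j) a)) = 0 \<and> 0 \<le> Re (quad_form n c (\<lambda>i j. min (f i j) a))"
  proof (rule insert.IH)
    show "ultrametric_kernel n (\<lambda>i j. min (f i j) a)"
      using insert.prems(1) a(1) by (rule ultrametric_kernel_min)
    have "a \<in> insert 0 A"
      unfolding a_def using insert.hyps(1) by (intro Max_in) auto
    show "\<forall>i<n. \<forall>j<n. min (f i j) a \<in> insert 0 A"
    proof (intro allI impI)
      fix i j
      assume "i < n" "j < n"
      then have "f i j \<in> insert 0 (insert b A)"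
        using insert.prems(2) by blast
      then show "min (f i j) a \<in> insert 0 A"
        using a \<open>a \<in> insert 0 A\<close> by (auto simp: min_def)
    qed
  qed (use insert.prems(3) in auto)
  moreover have "Im (quad_form n c (\<lambda>i j. if b \<le> f i j then 1 else 0)) = 0
      \<and> 0 \<le> Re (quad_form n c (\<lambda>i j. if b \<le> f i j then 1 else 0))"
    using insert.prems(1) unfolding ultrametric_kernel_def
    by (intro equivalence_kernel_psd) (metis, metis min.bounded_iff order_trans)
  ultimately show ?case
    using a(2) by (simp add: split)
qed

lemma ultrametric_kernel_psd:
  assumes "ultrametric_kernel n f"
  shows "Im (quad_form n c f) = 0 \<and> 0 \<le> Re (quad_form n c f)"
proof (rule ultrametric_kernel_psd_values[OF _ _ assms])
  define V where "V = {v. \<exists>i<n. \<exists>j<n. v = f i j \<and> 0 < v}"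
  have "V \<subseteq> (\<lambda>(i, j). f i j) ` ({..<n} \<times> {..<n})"
    by (auto simp: V_def)
  then show "finite V"
    by (rule finite_subset) simp
  show "V \<subseteq> {0<..}"
    by (auto simp: V_def)
  show "\<forall>i<n. \<forall>j<n. f i j \<in> insert 0 V"
  proof (intro allI impI)
    fix i j
    assume "i < n" "j < n"
    moreover from this have "0 \<le> f i j"
      using assms by (simp add: ultrametric_kernel_def)
    ultimately show "f i j \<in> insert 0 V"
      unfolding V_def by (cases "f i j = 0") auto
  qed
qed

section \<open>Towers of local fields\<close>

lemma local_subfield_if_normalized: "normalized_local_field F av \<Longrightarrow> local_subfield F av"
  unfolding normalized_local_field_def by unfold_locales auto

lemma openin_ind_lim_topology:
  "openin (ind_lim_topology K av) U \<longleftrightarrow>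
    (\<forall>n. \<forall>x\<in>U \<inter> K n. \<exists>e>0. \<forall>y\<in>K n. av n (y - x) < e \<longrightarrow> y \<in> U)"
proof -
  define P where "P U \<longleftrightarrow> (\<forall>n. \<forall>x\<in>U \<inter> K n. \<exists>e>0. \<forall>y\<in>K n. av n (y - x) < e \<longrightarrow> y \<in> U)" for U
  have "istopology P"
    unfolding istopology_def
  proof (intro conjI allI impI)
    fix S T
    assume ST: "P S" "P T"
    show "P (S \<inter> T)"
      unfolding P_def
    proof (intro allI ballI)
      fix n x
      assume x: "x \<in> S \<inter> T \<inter> K n"
      obtain e1 where "e1 > 0" "\<forall>y\<in>K n. av n (y - x) < e1 \<longrightarrow> y \<in> S"
        using ST(1) x unfolding P_def by blast
      moreover obtain e2 where "e2 > 0" "\<forall>y\<in>K n. av n (y - x) < e2 \<longrightarrow> y \<in> T"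
        using ST(2) x unfolding P_def by blast
      ultimately show "\<exists>e>0. \<forall>y\<in>K n. av n (y - x) < e \<longrightarrow> y \<in> S \<inter> T"
        by (intro exI[of _ "min e1 e2"]) auto
    qed
  next
    fix \<U>
    assume "\<forall>S\<in>\<U>. P S"
    then show "P (\<Union>\<U>)"
      unfolding P_def by (metis IntD1 IntD2 IntI UnionE UnionI)
  qed
  then show ?thesis
    unfolding ind_lim_topology_def P_def[symmetric] by (simp add: topology_inverse')
qed

lemma continuous_map_ind_lim_if_locally_constant:
  assumes "\<And>n x. x \<in> K n \<Longrightarrow> \<exists>e>0. \<forall>y\<in>K n. av n (y - x) < e \<longrightarrow> f y = f x"
  shows "continuous_map (ind_lim_topology K av) euclidean f"
proof -
  have "openin (ind_lim_topology K av) UNIV"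
    unfolding openin_ind_lim_topology by (auto intro: exI[of _ 1])
  then have topspace: "topspace (ind_lim_topology K av) = UNIV"
    by (metis openin_subset top.extremum_unique)
  have "openin (ind_lim_topology K av) {x. f x \<in> U}" for U
    unfolding openin_ind_lim_topology using assms by fastforce
  then show ?thesis
    by (simp add: continuous_map_def topspace)
qed

lemma rho_nonneg: "0 \<le> rho \<alpha> s t"
  by (simp add: rho_def)

lemma rho_antimono:
  assumes "\<alpha> > 0" "t > 0" "s \<le> s'"
  shows "rho \<alpha> s' t \<le> rho \<alpha> s t"
proof (cases "s > 1")
  case True
  then have "s powr \<alpha> \<le> s' powr \<alpha>"
    using assms by (intro powr_mono2) auto
  then show ?thesis
    using True assms by (simp add: rho_def)
next
  case False
  then show ?thesis
    using assms by (simp add: rho_def)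
qed

locale local_tower =
  fixes K :: "nat \<Rightarrow> 'a::field set" and av :: "nat \<Rightarrow> 'a \<Rightarrow> real" and m :: "nat \<Rightarrow> nat"
  assumes chain: "\<And>n. K n \<subseteq> K (Suc n)"
    and union: "(\<Union>n. K n) = UNIV"
    and local: "\<And>n. normalized_local_field (K n) (av n)"
    and degree: "\<And>n. ext_degree (K 0) (K n) (m n)"
    and compat: "\<And>n x. x \<in> K 0 \<Longrightarrow> (av n x < 1 \<longleftrightarrow> av 0 x < 1)"
begin

lemma local_field: "local_subfield (K n) (av n)"
  using local by (rule local_subfield_if_normalized)

lemma extension: "local_extension (K 0) (K n) (av 0) (av n) (m n)"
  by (intro local_extension.intro local_extension_axioms.intro local_field degree compat)

lemma K_mono: "n \<le> n' \<Longrightarrow> K n \<subseteq> K n'"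
  using lift_Suc_mono_le[of K, OF chain] by blast

lemma av_restrict_base: "x \<in> K 0 \<Longrightarrow> av n x = av 0 x ^ m n"
  using local_extension.avL_restrict[OF extension] .

lemma m_pos: "m n > 0"
  using local_extension.degree_pos[OF extension] .

interpretation K0: local_subfield "K 0" "av 0"
  by (rule local_field)

abbreviation p0 :: 'a where
  "p0 \<equiv> K0.unif"

lemma p0_mem: "p0 \<in> K n"
  using K0.unif_mem K_mono[of 0 n] by auto

lemma av_p0: "av n p0 = inverse K0.q ^ m n"
  using av_restrict_base[OF K0.unif_mem] by (simp add: K0.av_unif)

lemma av_p0_pos: "0 < av n p0" and av_p0_less_1: "av n p0 < 1"
  using K0.inverse_q_pos K0.inverse_q_less_1 m_pos[of n]
  by (simp_all add: av_p0 power_less_one_iff)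

lemma integers_mono:
  assumes "n \<le> n'" "x \<in> K n" "av n x \<le> 1"
  shows "av n' x \<le> 1"
proof -
  interpret Kn: local_subfield "K n" "av n"
    by (rule local_field)
  interpret Kn': local_subfield "K n'" "av n'"
    by (rule local_field)
  obtain C where C: "\<And>z. z \<in> Kn.integers \<Longrightarrow> av n' z \<le> C"
  proof (rule local_extension.integers_bounded[OF extension])
    show "nonarch_subfield (K n') (av n')"
      by unfold_locales
    show "K n \<subseteq> K n'"
      using assms(1) by (rule K_mono)
    show "av n' a \<le> 1" if "a \<in> K0.integers" for a
      using that av_restrict_base[of a n'] by (simp add: K0.integers_iff power_le_one)
  qed blast
  have "av n' (x ^ j) \<le> C" for j
    using assms(2,3) by (intro C) (simp add: Kn.integers_iff Kn.power_closed Kn.av_power power_le_one)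
  then show ?thesis
    using assms K_mono by (intro Kn'.av_le_one_if_powers_bounded[of x]) auto
qed

lemma open_ball_mono:
  assumes "n \<le> n'" "x \<in> K n" "av n x < 1"
  shows "av n' x < 1"
proof -
  interpret Kn: local_subfield "K n" "av n"
    by (rule local_field)
  interpret Kn': local_subfield "K n'" "av n'"
    by (rule local_field)
  have x': "x \<in> K n'"
    using assms K_mono by auto
  obtain j where j: "av n x ^ j < av n p0"
    using real_arch_pow_inv[OF av_p0_pos assms(3)] by blast
  then have "j > 0"
    using av_p0_less_1[of n] by (cases j) auto
  have "av n (x ^ j / p0) \<le> 1"
    using j assms(2) p0_mem av_p0_pos by (simp add: Kn.av_divide Kn.av_power Kn.power_closed)
  then have "av n' (x ^ j / p0) \<le> 1"
    using assms(2) p0_mem by (intro integers_mono[OF assms(1)]) (auto simp: Kn.divide_closed Kn.power_closed)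
  then have "av n' x ^ j \<le> av n' p0"
    using x' p0_mem[of n'] av_p0_pos[of n'] K0.unif_nonzero
    by (simp add: Kn'.av_divide Kn'.av_power Kn'.power_closed divide_le_eq_1)
  also have "\<dots> < 1"
    by (rule av_p0_less_1)
  finally show ?thesis
    using \<open>j > 0\<close> Kn'.av_nonneg[OF x'] by (meson not_le one_le_power)
qed

lemma same_open_ball:
  assumes "n \<le> n'" "x \<in> K n"
  shows "av n' x < 1 \<longleftrightarrow> av n x < 1"
proof
  interpret Kn: local_subfield "K n" "av n"
    by (rule local_field)
  interpret Kn': local_subfield "K n'" "av n'"
    by (rule local_field)
  assume "av n' x < 1"
  show "av n x < 1"
  proof (rule ccontr)
    assume "\<not> av n x < 1"
    then have "x \<noteq> 0" "av n (inverse x) \<le> 1"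
      using assms(2) by (auto simp: Kn.av_inverse inverse_le_1_iff)
    then have "av n' (inverse x) \<le> 1"
      using assms(2) by (intro integers_mono[OF assms(1)]) (auto simp: Kn.inverse_closed)
    moreover have "x \<in> K n'"
      using assms K_mono by blast
    ultimately show False
      using \<open>av n' x < 1\<close> Kn'.av_pos[of x] \<open>x \<noteq> 0\<close> by (simp add: Kn'.av_inverse inverse_le_1_iff)
  qed
qed (use open_ball_mono assms in blast)

lemma av_compat:
  assumes "n \<le> n'" "x \<in> K n"
  shows "av n' x = av n x powr (real (m n') / real (m n))"
proof -
  interpret Kn: local_subfield "K n" "av n"
    by (rule local_field)
  interpret Kn': local_subfield "K n'" "av n'"
    by (rule local_field)
  obtain c where c: "c > 0" "\<And>x. x \<in> K n \<Longrightarrow> av n' x = av n x powr c"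
    using Kn.nonarch_abs_eq_powr[OF nonarch_abs_subset[OF Kn'.nonarch K_mono[OF assms(1)]]]
      same_open_ball[OF assms(1)] by blast
  define \<beta> where "\<beta> = inverse K0.q"
  have \<beta>: "0 < \<beta>" "\<beta> < 1"
    using K0.inverse_q_pos K0.inverse_q_less_1 by (simp_all add: \<beta>_def)
  have "\<beta> powr real (m n') = \<beta> powr (real (m n) * c)"
    using c(2)[OF p0_mem] \<beta> by (simp add: av_p0 \<beta>_def powr_realpow[symmetric] powr_powr)
  then have "c = real (m n') / real (m n)"
    using powr_inj[of \<beta>] \<beta> m_pos[of n] by (simp add: field_simps)
  then show ?thesis
    using c(2)[OF assms(2)] by simp
qed

lemma knorm_eq:
  assumes "x \<in> K n"
  shows "knorm K av m x = av n x powr (1 / real (m n))"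
proof -
  define N where "N = (LEAST n. x \<in> K n)"
  have "x \<in> K N" "N \<le> n"
    unfolding N_def using assms by (auto intro: LeastI Least_le)
  then have "av n x = av N x powr (real (m n) / real (m N))"
    by (intro av_compat)
  then show ?thesis
    using m_pos[of n] by (simp add: knorm_def Let_def N_def[symmetric] powr_powr)
qed

lemma ex_common_level: "\<exists>n. x \<in> K n \<and> y \<in> K n"
proof -
  obtain a b where "x \<in> K a" "y \<in> K b"
    using union by blast
  then show ?thesis
    using K_mono[of a "max a b"] K_mono[of b "max a b"] by auto
qed

lemma knorm_uminus: "knorm K av m (- x) = knorm K av m x"
proof -
  obtain n where x: "x \<in> K n"
    using union by blast
  interpret Kn: local_subfield "K n" "av n"
    by (rule local_field)
  show ?thesis
    using x knorm_eq[of "- x" n] by (simp add: knorm_eq Kn.uminus_closed)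
qed

lemma knorm_ultrametric: "knorm K av m (x + y) \<le> max (knorm K av m x) (knorm K av m y)"
proof -
  obtain n where xy: "x \<in> K n" "y \<in> K n"
    using ex_common_level by blast
  interpret Kn: local_subfield "K n" "av n"
    by (rule local_field)
  have "av n (x + y) powr (1 / real (m n)) \<le> max (av n x) (av n y) powr (1 / real (m n))"
    using xy by (intro powr_mono2 Kn.av_add) (simp_all add: Kn.add_closed)
  also have "\<dots> \<le> max (av n x powr (1 / real (m n))) (av n y powr (1 / real (m n)))"
    by (cases "av n x \<le> av n y") (simp_all add: max_def)
  finally show ?thesis
    using knorm_eq[OF Kn.add_closed[OF xy]] knorm_eq[OF xy(1)] knorm_eq[OF xy(2)] by simp
qed

lemma rho_knorm_ultrametric_kernel:
  assumes "\<alpha> > 0" "t > 0"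
  shows "ultrametric_kernel n (\<lambda>i j. rho \<alpha> (knorm K av m (\<xi> i - \<xi> j)) t)"
  unfolding ultrametric_kernel_def
proof (intro conjI allI impI)
  fix i j l
  have "knorm K av m (\<xi> i - \<xi> l) \<le> max (knorm K av m (\<xi> i - \<xi> j)) (knorm K av m (\<xi> j - \<xi> l))"
    using knorm_ultrametric[of "\<xi> i - \<xi> j" "\<xi> j - \<xi> l"] by simp
  then show "min (rho \<alpha> (knorm K av m (\<xi> i - \<xi> j)) t) (rho \<alpha> (knorm K av m (\<xi> j - \<xi> l)) t)
      \<le> rho \<alpha> (knorm K av m (\<xi> i - \<xi> l)) t"
    using rho_antimono[OF assms] by (metis le_max_iff_disj min.coboundedI1 min.coboundedI2)
  show "0 \<le> rho \<alpha> (knorm K av m (\<xi> i - \<xi> j)) t"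
    by (rule rho_nonneg)
  show "rho \<alpha> (knorm K av m (\<xi> i - \<xi> j)) t = rho \<alpha> (knorm K av m (\<xi> j - \<xi> i)) t"
    using knorm_uminus[of "\<xi> i - \<xi> j"] by simp
qed

lemma rho_knorm_positive_definite:
  assumes "\<alpha> > 0" "t > 0"
  shows "positive_definite (\<lambda>\<xi>. complex_of_real (rho \<alpha> (knorm K av m \<xi>) t))"
  using ultrametric_kernel_psd[OF rho_knorm_ultrametric_kernel[OF assms]]
  by (simp add: positive_definite_def quad_form_def)

lemma rho_knorm_continuous:
  "continuous_map (ind_lim_topology K av) euclidean (\<lambda>\<xi>. complex_of_real (rho \<alpha> (knorm K av m \<xi>) t))"
proof (rule continuous_map_ind_lim_if_locally_constant)
  fix n x
  assume x: "x \<in> K n"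
  interpret Kn: local_subfield "K n" "av n"
    by (rule local_field)
  show "\<exists>e>0. \<forall>y\<in>K n. av n (y - x) < e \<longrightarrow>
      complex_of_real (rho \<alpha> (knorm K av m y) t) = complex_of_real (rho \<alpha> (knorm K av m x) t)"
  proof (cases "x = 0")
    case True
    have "rho \<alpha> (knorm K av m y) t = 1" if "y \<in> K n" "av n y < 1" for y
    proof -
      have "av n y powr (1 / real (m n)) \<le> 1"
        using that by (intro powr_le1) auto
      then show ?thesis
        using knorm_eq[OF that(1)] by (simp add: rho_def)
    qed
    moreover have "rho \<alpha> (knorm K av m 0) t = 1"
      using knorm_eq[OF Kn.zero_closed] by (simp add: rho_def)
    ultimately show ?thesis
      using True by (intro exI[of _ 1]) simp
  next
    case False
    have "knorm K av m y = knorm K av m x" if "y \<in> K n" "av n (y - x) < av n x" for y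
    proof -
      have "av n y = av n x"
        using Kn.av_add_eq_left[of x "y - x"] that x by (simp add: Kn.diff_closed)
      then show ?thesis
        using knorm_eq[OF that(1)] knorm_eq[OF x] by simp
    qed
    then show ?thesis
      using Kn.av_pos[OF x False] by (intro exI[of _ "av n x"]) simp
  qed
qed

end

theorem proposition8:
  fixes K :: "nat \<Rightarrow> 'a::field_char_0 set"
    and av :: "nat \<Rightarrow> 'a \<Rightarrow> real"
    and m :: "nat \<Rightarrow> nat"
    and \<alpha> t :: real
  assumes chain: "\<And>n. K n \<subseteq> K (Suc n)"
    and union: "(\<Union>n. K n) = UNIV"
    and local: "\<And>n. normalized_local_field (K n) (av n)"
    and degree: "\<And>n. ext_degree (K 0) (K n) (m n)"
    and compat: "\<And>n x. x \<in> K 0 \<Longrightarrow> (av n x < 1 \<longleftrightarrow> av 0 x < 1)"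
    and alpha: "\<alpha> > 0"
    and tpos: "t > 0"
  shows "continuous_map (ind_lim_topology K av) euclidean
           (\<lambda>\<xi>. complex_of_real (rho \<alpha> (knorm K av m \<xi>) t))
       \<and> positive_definite (\<lambda>\<xi>. complex_of_real (rho \<alpha> (knorm K av m \<xi>) t))"
proof -
  interpret local_tower K av m
    using chain union local degree compat by unfold_locales
  show ?thesis
    using rho_knorm_continuous rho_knorm_positive_definite[OF alpha tpos] by simp
qed

end
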